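(* Let $W$ be a channel from $\mathcal X$ to $\mathcal Y$. For every integer $M>0$, every real $C>0$ and every probability distribution $p$ on $\mathcal X$, there exists a resolvability code $\Psi$ with $|\Psi|=M$ and $$\epsilon(\Psi,W_p)\le 2\delta_{p,W,C}+\sqrt{\frac{\delta'_{p,W,C}}{M}},$$ and moreover $\delta'_{p,W,C}\le C$. If $\mathcal Y$ is finite, then for every $t$ with $-\tfrac12\le t<0$ there exists a resolvability code $\Psi'$ with $|\Psi'|=M$ and $$D(\Psi',W_p)\le\frac{\log\big(1+M^te^{\phi(t|W,p)}\big)}{-t},$$ and there exists a resolvability code $\Psi''$ with $|\Psi''|=M$ and $$D(\Psi'',W_p)\le\eta(\delta_{p,W,C})+\delta_{p,W,C}\log|\mathcal Y|+\frac{\delta'_{p,W,C}}{M}.$$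
   Context: A channel $W$ from a finite or countable set $\mathcal X$ to a finite or countable set $\mathcal Y$ is a map $x\mapsto W_x$ assigning a probability distribution $W_x$ on $\mathcal Y$; $W_p(y):=\sum_x p(x)W_x(y)$. A resolvability code $\Psi$ of size $|\Psi|=M$ is a tuple $(x_1,\dots,x_M)$ of elements of $\mathcal X$; its performance measures are $\epsilon(\Psi,W_p):=\sum_y\big|\frac1M\sum_{i=1}^MW_{x_i}(y)-W_p(y)\big|$ and $D(\Psi,W_p):=D\big(\frac1M\sum_{i=1}^MW_{x_i}\,\big\|\,W_p\big)$, where $D(q\|r)=\sum_y q(y)\log\frac{q(y)}{r(y)}$. Define $\delta_{p,W,C}:=\sum_x p(x)\sum_{y:\,W_x(y)>C\,W_p(y)}W_x(y)$, $\delta'_{p,W,C}:=\sum_x p(x)\sum_{y:\,W_x(y)\le C\,W_p(y),\,W_p(y)>0}\frac{W_x(y)^2}{W_p(y)}$, $\phi(t|W,p):=\log\sum_y\big(\sum_x p(x)W_x(y)^{1/(1+t)}\big)^{1+t}$, and $\eta(x):=-x\log x$. *)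

theory Defs
  imports "HOL-Analysis.Analysis" "HOL-Probability.Probability_Mass_Function"
begin

text \<open>A channel W from 'x to 'y is a map x \<mapsto> W x :: 'y pmf; an input distribution is p :: 'x pmf.
  Logarithms are natural logarithms.\<close>

definition Wp :: "'x pmf \<Rightarrow> ('x \<Rightarrow> 'y pmf) \<Rightarrow> 'y \<Rightarrow> real" where
  "Wp p W y = (\<Sum>\<^sub>\<infinity>x. pmf p x * pmf (W x) y)"

definition code_out :: "('x \<Rightarrow> 'y pmf) \<Rightarrow> 'x list \<Rightarrow> 'y \<Rightarrow> real" where
  "code_out W xs y = (\<Sum>i<length xs. pmf (W (xs ! i)) y) / real (length xs)"

definition eps_code :: "('x \<Rightarrow> 'y pmf) \<Rightarrow> 'x list \<Rightarrow> 'x pmf \<Rightarrow> real" where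
  "eps_code W xs p = (\<Sum>\<^sub>\<infinity>y. \<bar>code_out W xs y - Wp p W y\<bar>)"

definition KL :: "('y \<Rightarrow> real) \<Rightarrow> ('y \<Rightarrow> real) \<Rightarrow> ereal" where
  "KL q r = (if \<exists>y. q y > 0 \<and> r y = 0 then \<infinity>
             else ereal (\<Sum>\<^sub>\<infinity>y. if q y = 0 then 0 else q y * ln (q y / r y)))"

definition D_code :: "('x \<Rightarrow> 'y pmf) \<Rightarrow> 'x list \<Rightarrow> 'x pmf \<Rightarrow> ereal" where
  "D_code W xs p = KL (code_out W xs) (Wp p W)"

definition delta :: "'x pmf \<Rightarrow> ('x \<Rightarrow> 'y pmf) \<Rightarrow> real \<Rightarrow> real" where
  "delta p W C = (\<Sum>\<^sub>\<infinity>x. pmf p x *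
      (\<Sum>\<^sub>\<infinity>y\<in>{y. pmf (W x) y > C * Wp p W y}. pmf (W x) y))"

definition delta' :: "'x pmf \<Rightarrow> ('x \<Rightarrow> 'y pmf) \<Rightarrow> real \<Rightarrow> real" where
  "delta' p W C = (\<Sum>\<^sub>\<infinity>x. pmf p x *
      (\<Sum>\<^sub>\<infinity>y\<in>{y. pmf (W x) y \<le> C * Wp p W y \<and> Wp p W y > 0}. (pmf (W x) y)\<^sup>2 / Wp p W y))"

definition phi :: "real \<Rightarrow> ('x \<Rightarrow> 'y pmf) \<Rightarrow> 'x pmf \<Rightarrow> real" where
  "phi t W p = ln (\<Sum>\<^sub>\<infinity>y. (\<Sum>\<^sub>\<infinity>x. pmf p x * pmf (W x) y powr (1 / (1 + t))) powr (1 + t))"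

definition eta :: "real \<Rightarrow> real" where
  "eta x = - x * ln x"

end

theory Submission
  imports Defs "HOL-Probability.Product_PMF"
begin

(* Random coding: draw the M codewords independently from p and bound the expectation of the
   performance measure; some code does no worse than this expectation.

   Total variation: split W_x(y) at the threshold C W_p(y). The part above the threshold
   contributes at most 2 delta. For the part below it, the sample mean over the codewords has
   variance at most W_p(y) delta'_y / M, where delta'_y is the y-th summand of delta'. The
   inequality |Z| <= (c Z^2 / W_p(y) + W_p(y) / c) / 2 turns this into (c delta' / M + 1 / c) / 2
   after summing over y, and the best choice of c gives sqrt (delta' / M).

   Divergence: given that one codeword is x, the conditional expectation of q(y) / W_p(y) is
   W_x(y) / (M W_p(y)) + (M - 1) / M. The tangent line of ln at this point bounds the expected
   divergence by R = sum_y sum_x p(x) W_x(y) ln (W_x(y) / (M W_p(y)) + (M - 1) / M). Below the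
   threshold ln (1 + u) <= u, above it the logarithm is at most -ln W_p(y), and an entropy bound
   finishes the first estimate of R. The second uses ln (1 + u) <= ln (1 + u^s) / s, Jensen's
   inequality for ln and Hoelder's inequality, which produce phi. *)

lemma summable_on_pmf: "pmf p summable_on A"
  using pmf_abs_summable abs_summable_equivalent summable_on_iff_abs_summable_on_real by blast

lemma infsum_pmf_eq_1: "(\<Sum>\<^sub>\<infinity>x. pmf p x) = 1"
  by (metis infsetsum_pmf_eq_1 infsetsum_infsum pmf_abs_summable subset_UNIV)

lemma summable_on_pmf_mult_bounded:
  fixes f :: "'a \<Rightarrow> real"
  assumes "\<And>x. \<bar>f x\<bar> \<le> B"
  shows "(\<lambda>x. pmf p x * f x) summable_on A"
proof -
  have "(\<lambda>x. norm (pmf p x * f x)) summable_on A"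
    by (rule summable_on_comparison_test[OF summable_on_cmult_right[OF summable_on_pmf, of B]])
       (use assms in \<open>auto simp: abs_mult mult.commute intro!: mult_right_mono\<close>)
  then show ?thesis
    using summable_on_iff_abs_summable_on_real by blast
qed

lemma expectation_eq_infsum_pmf:
  fixes f :: "'a \<Rightarrow> real"
  assumes "\<And>x. \<bar>f x\<bar> \<le> B"
  shows "measure_pmf.expectation p f = (\<Sum>\<^sub>\<infinity>x. pmf p x * f x)"
proof -
  have "(\<lambda>x. norm (pmf p x * f x)) summable_on UNIV"
    using summable_on_pmf_mult_bounded[of "\<lambda>x. \<bar>f x\<bar>" B p UNIV] assms by (simp add: abs_mult)
  then have "Infinite_Set_Sum.abs_summable_on (\<lambda>x. pmf p x * f x) UNIV"
    using abs_summable_equivalent by blast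
  then show ?thesis
    by (simp add: pmf_expectation_eq_infsetsum infsetsum_infsum)
qed

lemma ennreal_infsum_eq_nn_integral:
  fixes f :: "'a \<Rightarrow> real"
  assumes "f summable_on A" "\<And>x. x \<in> A \<Longrightarrow> 0 \<le> f x"
  shows "ennreal (\<Sum>\<^sub>\<infinity>x\<in>A. f x) = (\<integral>\<^sup>+x. ennreal (f x) \<partial>count_space A)"
proof -
  have "Infinite_Set_Sum.abs_summable_on f A"
    using assms(1) summable_on_iff_abs_summable_on_real abs_summable_equivalent by blast
  then show ?thesis
    using nn_integral_conv_infsetsum assms(2) infsetsum_infsum by metis
qed

lemma infsum_swap_nonneg:
  fixes f :: "'a \<Rightarrow> 'b \<Rightarrow> real"
  assumes nonneg: "\<And>x y. 0 \<le> f x y"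
    and rows: "\<And>x. f x summable_on UNIV"
    and row_sums: "(\<lambda>x. \<Sum>\<^sub>\<infinity>y. f x y) summable_on UNIV"
  shows "(\<lambda>y. \<Sum>\<^sub>\<infinity>x. f x y) summable_on UNIV"
    and "(\<Sum>\<^sub>\<infinity>x. \<Sum>\<^sub>\<infinity>y. f x y) = (\<Sum>\<^sub>\<infinity>y. \<Sum>\<^sub>\<infinity>x. f x y)"
proof -
  have pairs: "(\<lambda>(x, y). f x y) summable_on UNIV \<times> UNIV"
    by (rule summable_on_SigmaI[where g = "\<lambda>x. \<Sum>\<^sub>\<infinity>y. f x y"])
       (use rows row_sums nonneg in auto)
  then have swapped: "(\<lambda>(y, x). f x y) summable_on UNIV \<times> UNIV"
    by (subst (asm) summable_on_swap) simp
  have "(\<lambda>x. f x y) summable_on UNIV" for y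
    using summable_on_SigmaD1[of "\<lambda>y x. f x y", OF swapped] by simp
  then show "(\<lambda>y. \<Sum>\<^sub>\<infinity>x. f x y) summable_on UNIV"
    using summable_on_SigmaD[OF swapped] by simp
  show "(\<Sum>\<^sub>\<infinity>x. \<Sum>\<^sub>\<infinity>y. f x y) = (\<Sum>\<^sub>\<infinity>y. \<Sum>\<^sub>\<infinity>x. f x y)"
    by (rule infsum_swap_banach[OF pairs])
qed

lemma expectation_infsum_le:
  fixes f :: "'a \<Rightarrow> 'b::countable \<Rightarrow> real"
  assumes nonneg: "\<And>\<omega> y. 0 \<le> f \<omega> y"
    and summable: "\<And>\<omega>. f \<omega> summable_on UNIV"
    and integrable: "\<And>y. integrable (measure_pmf Q) (\<lambda>\<omega>. f \<omega> y)"
    and bound: "\<And>y. measure_pmf.expectation Q (\<lambda>\<omega>. f \<omega> y) \<le> g y"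
    and g: "g summable_on UNIV"
  shows "measure_pmf.expectation Q (\<lambda>\<omega>. \<Sum>\<^sub>\<infinity>y. f \<omega> y) \<le> (\<Sum>\<^sub>\<infinity>y. g y)"
proof -
  have g_nonneg: "0 \<le> g y" for y
    using bound[of y] integral_nonneg_AE[of "\<lambda>\<omega>. f \<omega> y"] nonneg by (meson AE_I2 order_trans)
  have "(\<integral>\<^sup>+\<omega>. ennreal (\<Sum>\<^sub>\<infinity>y. f \<omega> y) \<partial>Q)
      = (\<integral>\<^sup>+\<omega>. \<integral>\<^sup>+y. ennreal (f \<omega> y) \<partial>count_space UNIV \<partial>Q)"
    by (intro nn_integral_cong ennreal_infsum_eq_nn_integral summable nonneg)
  also have "\<dots> = (\<integral>\<^sup>+y. \<integral>\<^sup>+\<omega>. ennreal (f \<omega> y) \<partial>Q \<partial>count_space UNIV)"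
    by (rule nn_integral_count_space_nn_integral) auto
  also have "\<dots> = (\<integral>\<^sup>+y. ennreal (measure_pmf.expectation Q (\<lambda>\<omega>. f \<omega> y)) \<partial>count_space UNIV)"
    by (intro nn_integral_cong nn_integral_eq_integral integrable) (simp add: nonneg)
  also have "\<dots> \<le> (\<integral>\<^sup>+y. ennreal (g y) \<partial>count_space UNIV)"
    by (intro nn_integral_mono ennreal_leI bound)
  also have "\<dots> = ennreal (\<Sum>\<^sub>\<infinity>y. g y)"
    by (rule ennreal_infsum_eq_nn_integral[symmetric, OF g g_nonneg])
  finally have "(\<integral>\<^sup>+\<omega>. ennreal (\<Sum>\<^sub>\<infinity>y. f \<omega> y) \<partial>Q) \<le> ennreal (\<Sum>\<^sub>\<infinity>y. g y)" .
  then show ?thesis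
    using infsum_nonneg[of UNIV g] g_nonneg
    by (subst integral_eq_nn_integral) (auto intro: infsum_nonneg nonneg simp: enn2real_leI)
qed

lemma exists_in_set_pmf_le_expectation:
  fixes f :: "'a \<Rightarrow> real"
  assumes "integrable (measure_pmf Q) f"
  shows "\<exists>\<omega>\<in>set_pmf Q. f \<omega> \<le> measure_pmf.expectation Q f"
proof (rule ccontr)
  assume "\<not> ?thesis"
  then have "measure_pmf.expectation Q (\<lambda>_. measure_pmf.expectation Q f) < measure_pmf.expectation Q f"
    by (intro measure_pmf.integral_less_AE_space) (use assms in \<open>auto simp: AE_measure_pmf_iff\<close>)
  then show False by simp
qed

lemma ln_le_tangent:
  fixes z a :: real
  assumes "0 < z" "0 < a"
  shows "ln z \<le> ln a + z / a - 1"
  using ln_le_minus_one[of "z / a"] assms by (simp add: ln_div)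

lemma one_plus_powr_le:
  fixes u s :: real
  assumes "0 \<le> u" "0 \<le> s" "s \<le> 1"
  shows "(1 + u) powr s \<le> 1 + u powr s"
proof -
  define v where "v = 1 + u"
  have v: "1 \<le> v" using assms by (simp add: v_def)
  have "1 = 1 / v + u / v" using v by (simp add: v_def field_simps)
  also have "\<dots> \<le> (1 / v) powr s + (u / v) powr s"
    using powr_mono'[of s 1 "1 / v"] powr_mono'[of s 1 "u / v"] assms v
    by (intro add_mono) (simp_all add: v_def)
  also have "\<dots> = (1 + u powr s) / v powr s"
    using v assms by (simp add: powr_divide add_divide_distrib)
  finally show ?thesis
    using v by (simp add: v_def field_simps)
qed

lemma abs_le_AM_GM:
  fixes z c r :: real
  assumes "0 < c" "0 < r"
  shows "\<bar>z\<bar> \<le> (c * z\<^sup>2 / r + r / c) / 2"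
proof -
  have "2 * c * r * \<bar>z\<bar> \<le> c * c * z\<^sup>2 + r * r"
    using zero_le_power2[of "c * \<bar>z\<bar> - r"]
    by (simp add: power2_eq_square algebra_simps abs_mult_self_eq)
  then show ?thesis
    using assms by (simp add: field_simps power2_eq_square)
qed

lemma expectation_abs_le_AM_GM:
  fixes Z :: "'a \<Rightarrow> real"
  assumes bounded: "\<And>\<omega>. \<bar>Z \<omega>\<bar> \<le> B" and "0 < c" "0 < r"
  shows "measure_pmf.expectation Q (\<lambda>\<omega>. \<bar>Z \<omega>\<bar>)
         \<le> (c * measure_pmf.expectation Q (\<lambda>\<omega>. (Z \<omega>)\<^sup>2) / r + r / c) / 2"
proof -
  have sq_bounded: "\<bar>(Z \<omega>)\<^sup>2\<bar> \<le> B\<^sup>2" for \<omega>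
    using power_mono[OF bounded[of \<omega>] abs_ge_zero, of 2] by simp
  have int_abs: "integrable (measure_pmf Q) (\<lambda>\<omega>. \<bar>Z \<omega>\<bar>)"
    by (rule measure_pmf.integrable_const_bound[where B = B]) (use bounded in auto)
  have int_sq: "integrable (measure_pmf Q) (\<lambda>\<omega>. (Z \<omega>)\<^sup>2)"
    by (rule measure_pmf.integrable_const_bound[where B = "B\<^sup>2"]) (use sq_bounded in auto)
  have "measure_pmf.expectation Q (\<lambda>\<omega>. \<bar>Z \<omega>\<bar>)
      \<le> measure_pmf.expectation Q (\<lambda>\<omega>. (c * (Z \<omega>)\<^sup>2 / r + r / c) / 2)"
    by (intro integral_mono int_abs abs_le_AM_GM assms) (use int_sq in simp)
  also have "\<dots> = (c * measure_pmf.expectation Q (\<lambda>\<omega>. (Z \<omega>)\<^sup>2) / r + r / c) / 2"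
    using int_sq by simp
  finally show ?thesis .
qed

lemma le_add_sqrt_of_parametrized_bounds:
  fixes e a v :: real
  assumes "0 \<le> v" and bounds: "\<And>c. 0 < c \<Longrightarrow> e \<le> a + (c * v + 1 / c) / 2"
  shows "e \<le> a + sqrt v"
proof (cases "v = 0")
  case True
  show ?thesis
  proof (rule ccontr)
    assume "\<not> ?thesis"
    then have gap: "0 < e - a" using True by simp
    then have "e \<le> a + (e - a) / 2" using bounds[of "1 / (e - a)"] True by simp
    then show False using gap by (simp add: field_simps)
  qed
next
  case False
  then have "0 < sqrt v" using assms(1) by simp
  moreover have "sqrt v * sqrt v = v" using assms(1) by simp
  ultimately show ?thesis
    using bounds[of "1 / sqrt v"] by (simp add: real_div_sqrt)
qed

lemma abs_mult_ln_le:
  fixes w z L U :: real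
  assumes "0 \<le> w" "w \<le> 1" "0 < L" "w / L \<le> z" "z \<le> U"
  shows "\<bar>w * ln z\<bar> \<le> 1 + \<bar>ln L\<bar> + U"
proof (cases "w = 0")
  case True
  then show ?thesis
    using assms by simp
next
  case False
  then have w: "0 < w" and z: "0 < z" and U: "0 < U"
    using assms by (auto intro: less_le_trans[of 0 "w / L"])
  have "w * ln z \<le> U"
  proof (cases "0 \<le> ln z")
    case True
    then have "w * ln z \<le> ln z" using mult_right_mono[OF assms(2) True] by simp
    also have "\<dots> \<le> z - 1" using ln_le_minus_one[OF z] by simp
    finally show ?thesis using assms(5) by simp
  next
    case False
    then have "w * ln z \<le> 0" using w by (simp add: mult_nonneg_nonpos)
    then show ?thesis using U by linarith
  qed
  moreover have "- 1 - \<bar>ln L\<bar> \<le> w * ln z"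
  proof -
    have "ln (w / L) \<le> ln z"
      using assms w z by simp
    then have "ln w - ln L \<le> ln z"
      using w assms(3) by (simp add: ln_div)
    then have "w * (ln w - ln L) \<le> w * ln z" using w by simp
    moreover have "w - 1 \<le> w * ln w"
      using ln_le_minus_one[of "1 / w"] w by (simp add: ln_div field_simps)
    moreover have "w * ln L \<le> \<bar>ln L\<bar>"
    proof -
      have "w * ln L \<le> w * \<bar>ln L\<bar>" using w by (intro mult_left_mono) auto
      also have "\<dots> \<le> \<bar>ln L\<bar>" using assms(2) w by (intro mult_left_le_one_le) auto
      finally show ?thesis .
    qed
    ultimately show ?thesis using w by (simp add: algebra_simps)
  qed
  ultimately show ?thesis
    using U abs_ge_zero[of "ln L"] unfolding abs_le_iff by linarith
qed

lemma sum_eta_le: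
  fixes b :: "'a \<Rightarrow> real"
  assumes fin: "finite A" and nonneg: "\<And>y. y \<in> A \<Longrightarrow> 0 \<le> b y"
  shows "(\<Sum>y\<in>A. eta (b y)) \<le> eta (\<Sum>y\<in>A. b y) + (\<Sum>y\<in>A. b y) * ln (card A)"
proof -
  define S where "S = (\<Sum>y\<in>A. b y)"
  define N where "N = real (card A)"
  show ?thesis
  proof (cases "S = 0")
    case True
    then have "b y = 0" if "y \<in> A" for y
      using sum_nonneg_eq_0_iff[OF fin nonneg] that by (simp add: S_def)
    then show ?thesis using True by (simp add: S_def eta_def)
  next
    case False
    then have S: "0 < S" using sum_nonneg[OF nonneg] by (simp add: S_def less_le)
    then have N: "0 < N" unfolding S_def N_def using fin by (auto simp: card_gt_0_iff)
    have tangent: "eta (b y) \<le> b y * (ln N - ln S) + S / N - b y" if y: "y \<in> A" for y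
    proof (cases "b y = 0")
      case False
      then have by_pos: "0 < b y" using nonneg[OF y] by simp
      have "ln S - ln N - ln (b y) \<le> S / (N * b y) - 1"
        using ln_le_minus_one[of "S / (N * b y)"] S N by_pos by (simp add: ln_div ln_mult)
      then have "b y * (ln S - ln N - ln (b y)) \<le> b y * (S / (N * b y) - 1)"
        using by_pos by simp
      moreover have "b y * (S / (N * b y) - 1) = S / N - b y"
        using by_pos N by (simp add: field_simps)
      ultimately show ?thesis
        unfolding eta_def by (simp add: right_diff_distrib)
    qed (use S N in \<open>simp add: eta_def\<close>)
    have "(\<Sum>y\<in>A. eta (b y)) \<le> (\<Sum>y\<in>A. b y * (ln N - ln S) + S / N - b y)"
      by (intro sum_mono tangent)
    also have "\<dots> = S * (ln N - ln S)"
      using N by (simp add: sum.distrib sum_subtractf sum_distrib_right[symmetric] S_def N_def)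
    also have "\<dots> = eta S + S * ln N"
      by (simp add: eta_def algebra_simps)
    finally show ?thesis by (simp add: S_def N_def)
  qed
qed

lemma powr_one_plus_le_Young:
  fixes u A S s :: real
  assumes u: "0 \<le> u" and A: "0 < A" and S: "0 < S" and s: "0 < s" "s < 1"
  shows "u powr (1 + s)
         \<le> A powr (1 - s) * S powr s * ((1 - s) * (u powr (1 / (1 - s)) / A) + s * (u / S))"
proof (cases "u = 0")
  case False
  then have u_pos: "0 < u" using u by simp
  have "(u powr (1 / (1 - s)) / A) powr (1 - s) * (u / S) powr s
      \<le> (1 - s) * (u powr (1 / (1 - s)) / A) + s * (u / S)"
    by (rule Youngs_inequality_0) (use A S s u_pos in auto)
  moreover have "(u powr (1 / (1 - s)) / A) powr (1 - s) = u / A powr (1 - s)"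
    using u_pos A s by (simp add: powr_divide powr_powr)
  moreover have "(u / S) powr s = u powr s / S powr s"
    using u_pos S by (simp add: powr_divide)
  moreover have "u * u powr s = u powr (1 + s)"
    using u_pos by (simp add: powr_add)
  ultimately show ?thesis
    using A S by (simp add: divide_le_eq mult.commute)
qed (use A S s in simp)

lemma Holder_pmf:
  fixes a :: "'a \<Rightarrow> real" and s :: real
  assumes nonneg: "\<And>x. 0 \<le> a x" and bounded: "\<And>x. a x \<le> B" and s: "0 < s" "s < 1"
  shows "(\<Sum>\<^sub>\<infinity>x. pmf p x * a x powr (1 + s))
       \<le> (\<Sum>\<^sub>\<infinity>x. pmf p x * a x powr (1 / (1 - s))) powr (1 - s) * (\<Sum>\<^sub>\<infinity>x. pmf p x * a x) powr s"
proof (cases "\<exists>x. 0 < pmf p x * a x")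
  case False
  then have "pmf p x * a x powr (1 + s) = 0" for x
    using nonneg[of x] by (metis mult_eq_0_iff mult_pos_pos pmf_nonneg powr_0 less_eq_real_def)
  then have "(\<Sum>\<^sub>\<infinity>x. pmf p x * a x powr (1 + s)) = 0"
    by (simp only: infsum_0)
  then show ?thesis by simp
next
  case True
  then obtain x0 where x0: "0 < pmf p x0 * a x0" ..
  define r where "r = 1 / (1 - s)"
  define A where "A = (\<Sum>\<^sub>\<infinity>x. pmf p x * a x powr r)"
  define S where "S = (\<Sum>\<^sub>\<infinity>x. pmf p x * a x)"
  have r: "0 \<le> r" using s by (simp add: r_def)
  have summable: "(\<lambda>x. pmf p x * a x powr e) summable_on UNIV" if "0 \<le> e" for e
    by (rule summable_on_pmf_mult_bounded[where B = "B powr e"])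
       (use nonneg bounded that in \<open>auto intro: powr_mono2\<close>)
  have sA: "(\<lambda>x. pmf p x * a x powr r) summable_on UNIV" using summable r by simp
  have sS: "(\<lambda>x. pmf p x * a x) summable_on UNIV"
    using summable[of 1] nonneg by (simp add: powr_one_gt_zero_iff[symmetric] less_eq_real_def)
  have positive: "0 < pmf p x0 * a x0 powr e" for e
    using x0 nonneg[of x0] by (simp add: zero_less_mult_iff)
  have "pmf p x0 * a x0 powr r \<le> A"
    using finite_sum_le_infsum[OF sA, of "{x0}"] nonneg by (simp add: A_def)
  then have A: "0 < A" using positive[of r] by linarith
  have "pmf p x0 * a x0 \<le> S"
    using finite_sum_le_infsum[OF sS, of "{x0}"] nonneg by (simp add: S_def)
  then have S_pos: "0 < S" using x0 by linarith
  define c where "c = A powr (1 - s) * S powr s"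
  have Young: "a x powr (1 + s) \<le> c * ((1 - s) * (a x powr r / A) + s * (a x / S))" for x
    unfolding c_def r_def by (rule powr_one_plus_le_Young[OF nonneg A S_pos s])
  have "(\<Sum>\<^sub>\<infinity>x. pmf p x * a x powr (1 + s))
      \<le> (\<Sum>\<^sub>\<infinity>x. (pmf p x * a x powr r) * (c * (1 - s) / A) + (pmf p x * a x) * (c * s / S))"
  proof (rule infsum_mono)
    show "(\<lambda>x. pmf p x * a x powr (1 + s)) summable_on UNIV" using summable s by simp
    show "(\<lambda>x. (pmf p x * a x powr r) * (c * (1 - s) / A) + (pmf p x * a x) * (c * s / S)) summable_on UNIV"
      by (intro summable_on_add summable_on_cmult_left sA sS)
    show "pmf p x * a x powr (1 + s) \<le> (pmf p x * a x powr r) * (c * (1 - s) / A) + (pmf p x * a x) * (c * s / S)" for x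
      using mult_left_mono[OF Young[of x] pmf_nonneg[of p x]] by (simp add: algebra_simps)
  qed
  also have "\<dots> = (\<Sum>\<^sub>\<infinity>x. (pmf p x * a x powr r) * (c * (1 - s) / A)) + (\<Sum>\<^sub>\<infinity>x. (pmf p x * a x) * (c * s / S))"
    by (intro infsum_add summable_on_cmult_left sA sS)
  also have "\<dots> = A * (c * (1 - s) / A) + S * (c * s / S)"
    by (simp only: infsum_cmult_left' A_def S_def)
  also have "\<dots> = c" using A S_pos by (simp add: field_simps)
  finally show ?thesis by (simp add: c_def A_def S_def r_def)
qed

lemma sum_infsum_ln_one_plus_le:
  fixes a Z :: "'x \<Rightarrow> 'y \<Rightarrow> real"
  assumes a: "\<And>x y. 0 \<le> a x y" and Z: "\<And>x y. 0 \<le> Z x y"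
    and summable_a: "\<And>y. (\<lambda>x. a x y) summable_on UNIV"
    and summable_aZ: "\<And>y. (\<lambda>x. a x y * Z x y) summable_on UNIV"
    and total: "(\<Sum>y\<in>Y. \<Sum>\<^sub>\<infinity>x. a x y) = 1"
  shows "(\<Sum>y\<in>Y. \<Sum>\<^sub>\<infinity>x. a x y * ln (1 + Z x y)) \<le> ln (1 + (\<Sum>y\<in>Y. \<Sum>\<^sub>\<infinity>x. a x y * Z x y))"
proof -
  define K where "K = (\<Sum>y\<in>Y. \<Sum>\<^sub>\<infinity>x. a x y * Z x y)"
  define b where "b = 1 + K"
  define c where "c = ln b - 1 + 1 / b"
  have b: "0 < b"
    unfolding b_def K_def using a Z by (simp add: add_pos_nonneg sum_nonneg infsum_nonneg)
  have tangent: "a x y * ln (1 + Z x y) \<le> a x y * c + a x y * Z x y * (1 / b)" for x y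
  proof -
    have "ln (1 + Z x y) \<le> ln b + (1 + Z x y) / b - 1"
      using Z[of x y] b by (intro ln_le_tangent) auto
    from mult_left_mono[OF this a[of x y]] show ?thesis
      by (simp add: c_def algebra_simps add_divide_distrib)
  qed
  have summable_ln: "(\<lambda>x. a x y * ln (1 + Z x y)) summable_on UNIV" for y
  proof (rule summable_on_comparison_test[OF summable_aZ[of y]])
    show "a x y * ln (1 + Z x y) \<le> a x y * Z x y" for x
      by (rule mult_left_mono[OF ln_add_one_self_le_self[OF Z] a])
    show "0 \<le> a x y * ln (1 + Z x y)" for x
      using a[of x y] Z[of x y] by simp
  qed
  have "(\<Sum>y\<in>Y. \<Sum>\<^sub>\<infinity>x. a x y * ln (1 + Z x y))
      \<le> (\<Sum>y\<in>Y. \<Sum>\<^sub>\<infinity>x. a x y * c + a x y * Z x y * (1 / b))"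
    by (intro sum_mono infsum_mono summable_ln summable_on_add summable_on_cmult_left summable_a
              summable_aZ tangent)
  also have "\<dots> = (\<Sum>y\<in>Y. (\<Sum>\<^sub>\<infinity>x. a x y) * c + (\<Sum>\<^sub>\<infinity>x. a x y * Z x y) * (1 / b))"
  proof (rule sum.cong[OF refl])
    fix y
    show "(\<Sum>\<^sub>\<infinity>x. a x y * c + a x y * Z x y * (1 / b))
        = (\<Sum>\<^sub>\<infinity>x. a x y) * c + (\<Sum>\<^sub>\<infinity>x. a x y * Z x y) * (1 / b)"
      using infsum_add[OF summable_on_cmult_left[OF summable_a[of y], of c]
                          summable_on_cmult_left[OF summable_aZ[of y], of "1 / b"]]
      by (simp only: infsum_cmult_left')
  qed
  also have "\<dots> = c + K / b"
    by (simp add: sum.distrib sum_distrib_right[symmetric] sum_divide_distrib[symmetric] total K_def)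
  also have "\<dots> = ln b"
  proof -
    have "1 / b + K / b = 1"
      using b unfolding b_def by (simp add: add_divide_distrib[symmetric])
    then show ?thesis unfolding c_def by linarith
  qed
  finally show ?thesis by (simp add: b_def K_def)
qed

section \<open>Codes with independent codewords\<close>

(* A code of length M is represented by \<omega> :: nat \<Rightarrow> 'x, with codewords \<omega> 0, ..., \<omega> (M - 1). *)
definition iid_code :: "nat \<Rightarrow> 'x pmf \<Rightarrow> (nat \<Rightarrow> 'x) pmf" where
  "iid_code M p = Pi_pmf {..<M} undefined (\<lambda>_. p)"

lemma iid_code_in_set_pmf: "\<omega> \<in> set_pmf (iid_code M p) \<Longrightarrow> i < M \<Longrightarrow> \<omega> i \<in> set_pmf p"
  by (auto simp: iid_code_def set_Pi_pmf PiE_dflt_def)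

lemma expectation_iid_code_coordinate:
  fixes f :: "'x \<Rightarrow> real"
  assumes "i < M"
  shows "measure_pmf.expectation (iid_code M p) (\<lambda>\<omega>. f (\<omega> i)) = measure_pmf.expectation p f"
proof -
  have "map_pmf (\<lambda>\<omega>. \<omega> i) (iid_code M p) = p"
    using assms by (simp add: iid_code_def Pi_pmf_component)
  then show ?thesis
    by (metis integral_map_pmf)
qed

definition sample_mean :: "nat \<Rightarrow> ('x \<Rightarrow> real) \<Rightarrow> (nat \<Rightarrow> 'x) \<Rightarrow> real" where
  "sample_mean M f \<omega> = (\<Sum>i<M. f (\<omega> i)) / M"

lemma sample_mean_nonneg: "(\<And>x. 0 \<le> f x) \<Longrightarrow> 0 \<le> sample_mean M f \<omega>"
  by (simp add: sample_mean_def sum_nonneg)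

lemma sample_mean_le_1:
  assumes "0 < M" "\<And>x. f x \<le> 1"
  shows "sample_mean M f \<omega> \<le> 1"
  using sum_mono[of "{..<M}" "\<lambda>i. f (\<omega> i)" "\<lambda>_. 1"] assms by (simp add: sample_mean_def)

lemma expectation_nonneg_le_1:
  fixes f :: "'a \<Rightarrow> real"
  assumes "\<And>x. 0 \<le> f x" "\<And>x. f x \<le> 1"
  shows "0 \<le> measure_pmf.expectation p f" "measure_pmf.expectation p f \<le> 1"
proof -
  show "0 \<le> measure_pmf.expectation p f"
    using assms by (simp add: integral_nonneg_AE)
  have "measure_pmf.expectation p f \<le> measure_pmf.expectation p (\<lambda>_. 1)"
    by (rule integral_mono) (use assms in \<open>auto intro: measure_pmf.integrable_const_bound[where B = 1]\<close>)
  then show "measure_pmf.expectation p f \<le> 1" by simp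
qed

lemma abs_sample_mean_minus_expectation_le_1:
  fixes f :: "'x \<Rightarrow> real"
  assumes "0 < M" "\<And>x. 0 \<le> f x" "\<And>x. f x \<le> 1"
  shows "\<bar>sample_mean M f \<omega> - measure_pmf.expectation p f\<bar> \<le> 1"
  using sample_mean_nonneg[where f = f and M = M and \<omega> = \<omega>, OF assms(2)]
    sample_mean_le_1[where f = f and \<omega> = \<omega>, OF assms(1,3)]
    expectation_nonneg_le_1[where f = f and p = p, OF assms(2,3)]
  unfolding abs_le_iff by linarith

lemma expectation_iid_code_sample_mean:
  fixes f :: "'x \<Rightarrow> real"
  assumes "0 < M" and bounded: "\<And>x. \<bar>f x\<bar> \<le> B"
  shows "measure_pmf.expectation (iid_code M p) (sample_mean M f) = measure_pmf.expectation p f"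
proof -
  have "integrable (measure_pmf (iid_code M p)) (\<lambda>\<omega>. f (\<omega> i))" for i
    by (rule measure_pmf.integrable_const_bound[where B = B]) (use bounded in auto)
  then have "measure_pmf.expectation (iid_code M p) (sample_mean M f)
      = (\<Sum>i<M. measure_pmf.expectation (iid_code M p) (\<lambda>\<omega>. f (\<omega> i))) / M"
    by (simp add: sample_mean_def[abs_def])
  also have "\<dots> = measure_pmf.expectation p f"
    using assms(1) by (simp add: expectation_iid_code_coordinate)
  finally show ?thesis .
qed

lemma expectation_iid_code_two_coordinates:
  fixes f g :: "'x \<Rightarrow> real"
  assumes "i < M" "j < M" "i \<noteq> j"
    and f: "\<And>x. 0 \<le> f x" "\<And>x. f x \<le> B" and g: "\<And>x. 0 \<le> g x" "\<And>x. g x \<le> B"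
  shows "measure_pmf.expectation (iid_code M p) (\<lambda>\<omega>. f (\<omega> i) * g (\<omega> j))
       = measure_pmf.expectation p f * measure_pmf.expectation p g"
proof -
  define F where "F k = (if k = i then f else if k = j then g else (\<lambda>_. 1::real))" for k
  have int_f: "integrable (measure_pmf p) f" and int_g: "integrable (measure_pmf p) g"
    using f g by (auto intro!: measure_pmf.integrable_const_bound[where B = B])
  have product: "(\<Prod>k\<in>{..<M}. F k (\<omega> k)) = (\<Prod>k\<in>{i, j}. F k (\<omega> k))" for \<omega>
    by (rule prod.mono_neutral_right) (use assms in \<open>auto simp: F_def\<close>)
  have "measure_pmf.expectation (iid_code M p) (\<lambda>\<omega>. f (\<omega> i) * g (\<omega> j))
      = measure_pmf.expectation (iid_code M p) (\<lambda>\<omega>. \<Prod>k\<in>{..<M}. F k (\<omega> k))"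
    using assms(3) by (simp only: product) (simp add: F_def)
  also have "\<dots> = (\<Prod>k\<in>{..<M}. measure_pmf.expectation p (F k))"
    unfolding iid_code_def
    by (rule expectation_prod_Pi_pmf) (use f g int_f int_g in \<open>auto simp: F_def\<close>)
  also have "\<dots> = (\<Prod>k\<in>{i, j}. measure_pmf.expectation p (F k))"
    by (rule prod.mono_neutral_right) (use assms in \<open>auto simp: F_def\<close>)
  also have "\<dots> = measure_pmf.expectation p f * measure_pmf.expectation p g"
    using assms(3) by (simp add: F_def)
  finally show ?thesis .
qed

lemma expectation_iid_code_centered_products:
  fixes f :: "'x \<Rightarrow> real" and p :: "'x pmf"
  assumes "i < M" "j < M" and f: "\<And>x. 0 \<le> f x" "\<And>x. f x \<le> B"
  shows "measure_pmf.expectation (iid_code M p)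
           (\<lambda>\<omega>. (f (\<omega> i) - measure_pmf.expectation p f) * (f (\<omega> j) - measure_pmf.expectation p f))
       = (if i = j then measure_pmf.expectation p (\<lambda>x. (f x)\<^sup>2) - (measure_pmf.expectation p f)\<^sup>2 else 0)"
    (is "_ = ?rhs")
proof -
  define m where "m = measure_pmf.expectation p f"
  have bounded: "\<bar>f x\<bar> \<le> B" for x using f[of x] by simp
  have int: "integrable (measure_pmf (iid_code M p)) (\<lambda>\<omega>. f (\<omega> k))" for k
    by (rule measure_pmf.integrable_const_bound[where B = B]) (use bounded in auto)
  have "\<bar>f a * f b\<bar> \<le> B * B" for a b
    using mult_mono[OF f(2) f(2) _ f(1)] f[of a] f[of b] by (simp add: abs_mult)
  then have int2: "integrable (measure_pmf (iid_code M p)) (\<lambda>\<omega>. f (\<omega> i) * f (\<omega> j))"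
    by (intro measure_pmf.integrable_const_bound[where B = "B * B"]) auto
  have "(\<lambda>\<omega>. (f (\<omega> i) - m) * (f (\<omega> j) - m))
      = (\<lambda>\<omega>. f (\<omega> i) * f (\<omega> j) - m * f (\<omega> i) - m * f (\<omega> j) + m * m)"
    by (auto simp: algebra_simps)
  then have "measure_pmf.expectation (iid_code M p) (\<lambda>\<omega>. (f (\<omega> i) - m) * (f (\<omega> j) - m))
      = measure_pmf.expectation (iid_code M p) (\<lambda>\<omega>. f (\<omega> i) * f (\<omega> j)) - m * m"
    using int int2 assms(1,2) by (simp add: expectation_iid_code_coordinate m_def)
  also have "\<dots> = ?rhs"
    using expectation_iid_code_coordinate[OF assms(1), where f = "\<lambda>x. f x * f x" and p = p]
      expectation_iid_code_two_coordinates[OF assms(1,2) _ f f, of p] assms(1)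
    by (cases "i = j") (simp_all add: m_def power2_eq_square)
  finally show ?thesis by (simp add: m_def)
qed

lemma expectation_iid_code_sample_mean_variance_le:
  fixes f :: "'x \<Rightarrow> real"
  assumes "0 < M" and f: "\<And>x. 0 \<le> f x" "\<And>x. f x \<le> B"
  shows "measure_pmf.expectation (iid_code M p) (\<lambda>\<omega>. (sample_mean M f \<omega> - measure_pmf.expectation p f)\<^sup>2)
         \<le> measure_pmf.expectation p (\<lambda>x. (f x)\<^sup>2) / M"
proof -
  define m where "m = measure_pmf.expectation p f"
  define v where "v = measure_pmf.expectation p (\<lambda>x. (f x)\<^sup>2)"
  have bounded: "\<bar>f x\<bar> \<le> B" for x using f[of x] by simp
  have int: "integrable (measure_pmf (iid_code M p)) (\<lambda>\<omega>. (f (\<omega> i) - m) * (f (\<omega> j) - m))" for i j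
    by (rule measure_pmf.integrable_const_bound[where B = "(B + \<bar>m\<bar>) * (B + \<bar>m\<bar>)"])
       (use bounded in \<open>auto simp: abs_mult intro!: mult_mono' abs_triangle_ineq4[THEN order_trans]\<close>)
  have square: "((\<Sum>i<M. f (\<omega> i)) / M - m)\<^sup>2
      = (\<Sum>i<M. \<Sum>j<M. (f (\<omega> i) - m) * (f (\<omega> j) - m)) / (M * M)" for \<omega>
  proof -
    have "(\<Sum>i<M. f (\<omega> i)) / M - m = (\<Sum>i<M. f (\<omega> i) - m) / M"
      using assms(1) by (simp add: sum_subtractf field_simps)
    then show ?thesis by (simp add: power2_eq_square sum_product)
  qed
  have "measure_pmf.expectation (iid_code M p) (\<lambda>\<omega>. ((\<Sum>i<M. f (\<omega> i)) / M - m)\<^sup>2)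
      = (\<Sum>i<M. \<Sum>j<M. measure_pmf.expectation (iid_code M p) (\<lambda>\<omega>. (f (\<omega> i) - m) * (f (\<omega> j) - m))) / (M * M)"
    unfolding square using int by simp
  also have "\<dots> = (\<Sum>i<M. \<Sum>j<M. if i = j then v - m\<^sup>2 else 0) / (M * M)"
    by (intro arg_cong[where f = "\<lambda>t. t / _"] sum.cong refl)
       (simp add: expectation_iid_code_centered_products[where f = f and p = p, OF _ _ f, folded m_def v_def])
  also have "\<dots> = (v - m\<^sup>2) / M"
    using assms(1) by simp
  also have "\<dots> \<le> v / M"
    by (simp add: divide_right_mono)
  finally show ?thesis by (simp add: m_def v_def sample_mean_def)
qed

lemma expectation_iid_code_abs_sample_mean_deviation_le:
  fixes f :: "'x \<Rightarrow> real"
  assumes "0 < M" and f: "\<And>x. 0 \<le> f x" "\<And>x. f x \<le> 1" and "0 < c" "0 < r"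
  shows "measure_pmf.expectation (iid_code M p) (\<lambda>\<omega>. \<bar>sample_mean M f \<omega> - measure_pmf.expectation p f\<bar>)
         \<le> (c * (measure_pmf.expectation p (\<lambda>x. (f x)\<^sup>2) / M) / r + r / c) / 2"
proof -
  have "\<bar>sample_mean M f \<omega> - measure_pmf.expectation p f\<bar> \<le> 1" for \<omega>
    by (rule abs_sample_mean_minus_expectation_le_1[where f = f, OF assms(1) f])
  then have "measure_pmf.expectation (iid_code M p) (\<lambda>\<omega>. \<bar>sample_mean M f \<omega> - measure_pmf.expectation p f\<bar>)
      \<le> (c * measure_pmf.expectation (iid_code M p)
              (\<lambda>\<omega>. (sample_mean M f \<omega> - measure_pmf.expectation p f)\<^sup>2) / r + r / c) / 2"
    by (rule expectation_abs_le_AM_GM[OF _ assms(4,5)])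
  also have "\<dots> \<le> (c * (measure_pmf.expectation p (\<lambda>x. (f x)\<^sup>2) / M) / r + r / c) / 2"
    using expectation_iid_code_sample_mean_variance_le[where f = f, OF assms(1) f] assms(4,5)
    by (intro divide_right_mono add_right_mono mult_left_mono) auto
  finally show ?thesis .
qed

locale random_code =
  fixes W :: "'x \<Rightarrow> 'y::countable pmf" and p :: "'x pmf" and M :: nat
  assumes M_pos: "0 < M"
begin

abbreviation w :: "'x \<Rightarrow> 'y \<Rightarrow> real" where "w x y \<equiv> pmf (W x) y"
abbreviation P :: "'y \<Rightarrow> real" where "P y \<equiv> Wp p W y"
abbreviation Q :: "(nat \<Rightarrow> 'x) pmf" where "Q \<equiv> iid_code M p"

lemma P_eq_pmf_bind: "P y = pmf (bind_pmf p W) y"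
  using expectation_eq_infsum_pmf[of "\<lambda>x. w x y" 1 p] by (simp add: Wp_def pmf_bind pmf_le_1)

lemma P_eq_expectation: "P y = measure_pmf.expectation p (\<lambda>x. w x y)"
  by (simp add: P_eq_pmf_bind pmf_bind)

lemma P_nonneg: "0 \<le> P y" and P_le_1: "P y \<le> 1"
  by (simp_all add: P_eq_pmf_bind pmf_le_1)

lemma summable_on_P: "P summable_on A" and infsum_P: "(\<Sum>\<^sub>\<infinity>y. P y) = 1"
  by (simp_all add: P_eq_pmf_bind[abs_def] summable_on_pmf infsum_pmf_eq_1)

lemma P_pos_iff: "0 < P y \<longleftrightarrow> P y \<noteq> 0"
  using P_nonneg[of y] by linarith

lemma P_pos_if_w_pos:
  assumes "x \<in> set_pmf p" "0 < w x y"
  shows "0 < P y"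
proof -
  have "y \<in> set_pmf (W x)" using assms(2) by (simp add: set_pmf_iff)
  then have "y \<in> set_pmf (bind_pmf p W)" using assms(1) by auto
  then show ?thesis by (simp add: P_eq_pmf_bind pmf_positive)
qed

definition q_code :: "(nat \<Rightarrow> 'x) \<Rightarrow> 'y \<Rightarrow> real" where
  "q_code \<omega> y = (\<Sum>i<M. w (\<omega> i) y) / M"

lemma code_out_eq_q_code: "code_out W (map \<omega> [0..<M]) = q_code \<omega>"
  by (auto simp: code_out_def q_code_def fun_eq_iff intro!: sum.cong)

lemma q_code_eq_pmf: "q_code \<omega> y = pmf (bind_pmf (pmf_of_set {..<M}) (\<lambda>i. W (\<omega> i))) y"
  using integral_pmf_of_set[of "{..<M}" "\<lambda>i. w (\<omega> i) y"] M_pos by (simp add: q_code_def pmf_bind lessThan_empty_iff)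

lemma q_code_nonneg: "0 \<le> q_code \<omega> y" and q_code_le_1: "q_code \<omega> y \<le> 1"
  by (simp_all add: q_code_eq_pmf pmf_le_1)

lemma summable_on_q_code: "q_code \<omega> summable_on A" and infsum_q_code: "(\<Sum>\<^sub>\<infinity>y. q_code \<omega> y) = 1"
  by (simp_all add: q_code_eq_pmf[abs_def] summable_on_pmf infsum_pmf_eq_1)

lemma w_le_M_q_code: "i < M \<Longrightarrow> w (\<omega> i) y \<le> M * q_code \<omega> y"
  using M_pos member_le_sum[of i "{..<M}" "\<lambda>i. w (\<omega> i) y"] by (simp add: q_code_def)

lemma P_pos_if_q_code_pos:
  assumes "\<omega> \<in> set_pmf Q" "0 < q_code \<omega> y"
  shows "0 < P y"
proof -
  have "\<exists>i<M. 0 < w (\<omega> i) y"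
  proof (rule ccontr)
    assume "\<not> ?thesis"
    then have "\<And>i. i < M \<Longrightarrow> w (\<omega> i) y = 0"
      by (meson not_less order_antisym pmf_nonneg)
    then have "q_code \<omega> y = 0" by (simp add: q_code_def)
    then show False using assms(2) by simp
  qed
  then show ?thesis
    using P_pos_if_w_pos iid_code_in_set_pmf[OF assms(1)] by blast
qed

lemma infsum_le_if_le_mult_w:
  fixes h :: "'y \<Rightarrow> real"
  assumes h: "\<And>y. 0 \<le> h y" "\<And>y. h y \<le> K * w x y"
  shows "h summable_on UNIV" and "(\<Sum>\<^sub>\<infinity>y. h y) \<le> K"
proof -
  show summable: "h summable_on UNIV"
    by (rule summable_on_comparison_test[OF summable_on_cmult_right[OF summable_on_pmf]]) (use h in auto)
  have "(\<Sum>\<^sub>\<infinity>y. h y) \<le> (\<Sum>\<^sub>\<infinity>y. K * w x y)"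
    by (intro infsum_mono summable summable_on_cmult_right summable_on_pmf h)
  then show "(\<Sum>\<^sub>\<infinity>y. h y) \<le> K"
    by (simp add: infsum_cmult_right' infsum_pmf_eq_1)
qed

lemma infsum_pmf_mult_infsum_swap:
  fixes h :: "'x \<Rightarrow> 'y \<Rightarrow> real"
  assumes h: "\<And>x y. 0 \<le> h x y" "\<And>x y. h x y \<le> K * w x y" and K: "0 \<le> K"
  shows "(\<Sum>\<^sub>\<infinity>x. pmf p x * (\<Sum>\<^sub>\<infinity>y. h x y)) = (\<Sum>\<^sub>\<infinity>y. \<Sum>\<^sub>\<infinity>x. pmf p x * h x y)"
    and "(\<lambda>y. \<Sum>\<^sub>\<infinity>x. pmf p x * h x y) summable_on UNIV"
proof -
  have row_sum: "(\<Sum>\<^sub>\<infinity>y. pmf p x * h x y) = pmf p x * (\<Sum>\<^sub>\<infinity>y. h x y)" for x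
    by (simp add: infsum_cmult_right')
  have row_sums: "(\<lambda>x. \<Sum>\<^sub>\<infinity>y. pmf p x * h x y) summable_on UNIV"
    unfolding row_sum
    by (rule summable_on_pmf_mult_bounded[where B = K])
       (use infsum_le_if_le_mult_w[OF h] K h in \<open>simp add: infsum_nonneg\<close>)
  note swap = infsum_swap_nonneg[of "\<lambda>x y. pmf p x * h x y",
      OF _ summable_on_cmult_right[OF infsum_le_if_le_mult_w(1)[OF h]] row_sums, unfolded row_sum]
  show "(\<Sum>\<^sub>\<infinity>x. pmf p x * (\<Sum>\<^sub>\<infinity>y. h x y)) = (\<Sum>\<^sub>\<infinity>y. \<Sum>\<^sub>\<infinity>x. pmf p x * h x y)"
    and "(\<lambda>y. \<Sum>\<^sub>\<infinity>x. pmf p x * h x y) summable_on UNIV"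
    using swap h by auto
qed

definition w_lo :: "real \<Rightarrow> 'x \<Rightarrow> 'y \<Rightarrow> real" where
  "w_lo C x y = (if w x y \<le> C * P y then w x y else 0)"

definition w_hi :: "real \<Rightarrow> 'x \<Rightarrow> 'y \<Rightarrow> real" where
  "w_hi C x y = (if C * P y < w x y then w x y else 0)"

lemma w_lo_plus_w_hi: "w_lo C x y + w_hi C x y = w x y"
  by (simp add: w_lo_def w_hi_def)

lemma w_lo_nonneg: "0 \<le> w_lo C x y" and w_lo_le: "w_lo C x y \<le> w x y"
  and w_hi_nonneg: "0 \<le> w_hi C x y" and w_hi_le: "w_hi C x y \<le> w x y"
  by (simp_all add: w_lo_def w_hi_def)

(* The summand of delta'; by x / 0 = 0 it vanishes where P y = 0, as in the definition of delta'. *)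
definition delta'_density :: "real \<Rightarrow> 'x \<Rightarrow> 'y \<Rightarrow> real" where
  "delta'_density C x y = (w_lo C x y)\<^sup>2 / P y"

lemma delta'_density_nonneg: "0 \<le> delta'_density C x y"
  by (simp add: delta'_density_def P_nonneg)

lemma delta'_density_le:
  assumes "0 \<le> C"
  shows "delta'_density C x y \<le> C * w x y"
proof (cases "w x y \<le> C * P y \<and> 0 < P y")
  case True
  then have "w x y * w x y \<le> (C * P y) * w x y" by (intro mult_right_mono) auto
  then show ?thesis
    using True by (simp add: delta'_density_def w_lo_def power2_eq_square divide_le_eq mult_ac)
next
  case False
  then have "delta'_density C x y = 0" by (auto simp: delta'_density_def w_lo_def P_pos_iff)
  then show ?thesis using assms by simp
qed

lemma abs_w_hi_le_1: "\<bar>w_hi C x y\<bar> \<le> 1"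
  using w_hi_nonneg[of C x y] w_hi_le[of C x y] pmf_le_1[of "W x" y] by simp

lemma abs_delta'_density_le:
  assumes "0 \<le> C"
  shows "\<bar>delta'_density C x y\<bar> \<le> C"
  using delta'_density_nonneg[of C x y] delta'_density_le[OF assms, of x y]
    mult_left_le[OF pmf_le_1[of "W x" y] assms] by simp

lemma delta_eq_infsum_w_hi:
  "delta p W C = (\<Sum>\<^sub>\<infinity>y. \<Sum>\<^sub>\<infinity>x. pmf p x * w_hi C x y)"
  "(\<lambda>y. \<Sum>\<^sub>\<infinity>x. pmf p x * w_hi C x y) summable_on UNIV"
proof -
  have "(\<Sum>\<^sub>\<infinity>y\<in>{y. C * P y < w x y}. w x y) = (\<Sum>\<^sub>\<infinity>y. w_hi C x y)" for x
    by (rule infsum_cong_neutral) (auto simp: w_hi_def)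
  then show "delta p W C = (\<Sum>\<^sub>\<infinity>y. \<Sum>\<^sub>\<infinity>x. pmf p x * w_hi C x y)"
    and "(\<lambda>y. \<Sum>\<^sub>\<infinity>x. pmf p x * w_hi C x y) summable_on UNIV"
    using infsum_pmf_mult_infsum_swap[of "w_hi C" 1, OF w_hi_nonneg _ zero_le_one] w_hi_le
    by (simp_all add: delta_def)
qed

lemma delta'_eq_infsum_delta'_density:
  assumes "0 \<le> C"
  shows "delta' p W C = (\<Sum>\<^sub>\<infinity>y. \<Sum>\<^sub>\<infinity>x. pmf p x * delta'_density C x y)"
    and "(\<lambda>y. \<Sum>\<^sub>\<infinity>x. pmf p x * delta'_density C x y) summable_on UNIV"
    and "delta' p W C = (\<Sum>\<^sub>\<infinity>x. pmf p x * (\<Sum>\<^sub>\<infinity>y. delta'_density C x y))"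
proof -
  have "(\<Sum>\<^sub>\<infinity>y\<in>{y. w x y \<le> C * P y \<and> 0 < P y}. (w x y)\<^sup>2 / P y) = (\<Sum>\<^sub>\<infinity>y. delta'_density C x y)" for x
    by (rule infsum_cong_neutral) (auto simp: delta'_density_def w_lo_def P_pos_iff)
  then have "delta' p W C = (\<Sum>\<^sub>\<infinity>x. pmf p x * (\<Sum>\<^sub>\<infinity>y. delta'_density C x y))"
    by (simp add: delta'_def)
  then show "delta' p W C = (\<Sum>\<^sub>\<infinity>y. \<Sum>\<^sub>\<infinity>x. pmf p x * delta'_density C x y)"
    and "(\<lambda>y. \<Sum>\<^sub>\<infinity>x. pmf p x * delta'_density C x y) summable_on UNIV"
    and "delta' p W C = (\<Sum>\<^sub>\<infinity>x. pmf p x * (\<Sum>\<^sub>\<infinity>y. delta'_density C x y))"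
    using infsum_pmf_mult_infsum_swap[OF delta'_density_nonneg delta'_density_le[OF assms] assms] by simp_all
qed

lemma delta'_nonneg: "0 \<le> delta' p W C"
  unfolding delta'_def by (intro infsum_nonneg mult_nonneg_nonneg) (auto intro: infsum_nonneg)

lemma delta'_le:
  assumes "0 \<le> C"
  shows "delta' p W C \<le> C"
proof -
  have row: "(\<Sum>\<^sub>\<infinity>y. delta'_density C x y) \<le> C" for x
    by (rule infsum_le_if_le_mult_w(2)[OF delta'_density_nonneg delta'_density_le[OF assms]])
  have "delta' p W C \<le> (\<Sum>\<^sub>\<infinity>x. pmf p x * C)"
    unfolding delta'_eq_infsum_delta'_density(3)[OF assms]
    by (intro infsum_mono mult_left_mono row summable_on_cmult_left summable_on_pmf
              summable_on_pmf_mult_bounded[where B = C])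
       (auto simp: infsum_nonneg delta'_density_nonneg intro: order_trans[OF _ row])
  also have "\<dots> = C"
    by (simp add: infsum_cmult_left' infsum_pmf_eq_1)
  finally show ?thesis .
qed

end

section \<open>Total variation distance\<close>

context random_code
begin

lemma abs_q_code_minus_P_le_1: "\<bar>q_code \<omega> y - P y\<bar> \<le> 1"
  using q_code_nonneg[of \<omega> y] q_code_le_1[of \<omega> y] P_nonneg[of y] P_le_1[of y] by (simp add: abs_le_iff)

lemma expectation_w_lo_sq_div_P:
  "measure_pmf.expectation p (\<lambda>x. (w_lo C x y)\<^sup>2) / P y = (\<Sum>\<^sub>\<infinity>x. pmf p x * delta'_density C x y)"
proof -
  have bound: "\<bar>(w_lo C x y)\<^sup>2 / P y\<bar> \<le> 1 / P y" for x
  proof -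
    have "(w_lo C x y)\<^sup>2 \<le> 1"
      using w_lo_nonneg[of C x y] w_lo_le[of C x y] pmf_le_1[of "W x" y] by (simp add: power_le_one)
    then show ?thesis using P_nonneg[of y] by (simp add: divide_right_mono)
  qed
  have "measure_pmf.expectation p (\<lambda>x. (w_lo C x y)\<^sup>2) / P y
      = measure_pmf.expectation p (\<lambda>x. (w_lo C x y)\<^sup>2 / P y)"
    by simp
  also have "\<dots> = (\<Sum>\<^sub>\<infinity>x. pmf p x * ((w_lo C x y)\<^sup>2 / P y))"
    by (rule expectation_eq_infsum_pmf[OF bound])
  finally show ?thesis by (simp only: delta'_density_def)
qed

lemma expectation_abs_sample_mean_w_lo_deviation_le:
  assumes "0 < c"
  shows "measure_pmf.expectation Q
           (\<lambda>\<omega>. \<bar>sample_mean M (\<lambda>x. w_lo C x y) \<omega> - measure_pmf.expectation p (\<lambda>x. w_lo C x y)\<bar>)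
         \<le> (c * (\<Sum>\<^sub>\<infinity>x. pmf p x * delta'_density C x y) / M + P y / c) / 2"
proof (cases "P y = 0")
  case True
  then have "(\<lambda>x. w_lo C x y) = (\<lambda>_. 0)"
    by (simp add: fun_eq_iff w_lo_def order_antisym)
  then show ?thesis
    using True assms by (simp add: sample_mean_def infsum_nonneg delta'_density_nonneg)
next
  case False
  then have "0 < P y" by (simp add: P_pos_iff)
  then show ?thesis
    using expectation_iid_code_abs_sample_mean_deviation_le[OF M_pos _ _ assms, of "\<lambda>x. w_lo C x y" "P y" p]
      w_lo_nonneg w_lo_le[THEN order_trans, OF pmf_le_1]
    by (simp add: expectation_w_lo_sq_div_P[symmetric] ac_simps)
qed

lemma expectation_abs_q_code_deviation_le:
  assumes c: "0 < c"
  shows "measure_pmf.expectation Q (\<lambda>\<omega>. \<bar>q_code \<omega> y - P y\<bar>)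
     \<le> 2 * (\<Sum>\<^sub>\<infinity>x. pmf p x * w_hi C x y)
       + (c * (\<Sum>\<^sub>\<infinity>x. pmf p x * delta'_density C x y) / M + P y / c) / 2"
proof -
  define lo where "lo x = w_lo C x y" for x
  define hi where "hi x = w_hi C x y" for x
  define dev where "dev \<omega> = \<bar>sample_mean M lo \<omega> - measure_pmf.expectation p lo\<bar>" for \<omega>
  have lo: "0 \<le> lo x" "lo x \<le> 1" and hi: "0 \<le> hi x" "hi x \<le> 1" for x
    using w_lo_le[of C x y] w_hi_le[of C x y] pmf_le_1[of "W x" y]
    by (simp_all add: lo_def hi_def w_lo_nonneg w_hi_nonneg)
  have int_lo: "integrable (measure_pmf p) lo" and int_hi: "integrable (measure_pmf p) hi"
    using lo hi by (auto intro!: measure_pmf.integrable_const_bound[where B = 1])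
  have P_split: "P y = measure_pmf.expectation p lo + measure_pmf.expectation p hi"
    using Bochner_Integration.integral_add[OF int_lo int_hi]
    by (simp add: P_eq_expectation lo_def hi_def w_lo_plus_w_hi)
  have q_split: "q_code \<omega> y = sample_mean M lo \<omega> + sample_mean M hi \<omega>" for \<omega>
    by (simp only: q_code_def sample_mean_def lo_def hi_def sum.distrib[symmetric]
                   add_divide_distrib[symmetric] w_lo_plus_w_hi)
  have pointwise: "\<bar>q_code \<omega> y - P y\<bar> \<le> dev \<omega> + sample_mean M hi \<omega> + measure_pmf.expectation p hi" for \<omega>
  proof -
    have "\<bar>q_code \<omega> y - P y\<bar> \<le> dev \<omega> + \<bar>sample_mean M hi \<omega> - measure_pmf.expectation p hi\<bar>"
      unfolding q_split P_split dev_def by linarith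
    moreover have "0 \<le> measure_pmf.expectation p hi" "0 \<le> sample_mean M hi \<omega>"
      using hi by (simp_all add: integral_nonneg_AE sample_mean_nonneg)
    ultimately show ?thesis by linarith
  qed
  have "\<bar>dev \<omega>\<bar> \<le> 1" for \<omega>
    using abs_sample_mean_minus_expectation_le_1[where f = lo and p = p and \<omega> = \<omega>, OF M_pos lo]
    by (simp add: dev_def)
  then have int_dev: "integrable (measure_pmf Q) dev"
    by (intro measure_pmf.integrable_const_bound[where B = 1]) auto
  have int_mean_hi: "integrable (measure_pmf Q) (sample_mean M hi)"
    by (intro measure_pmf.integrable_const_bound[where B = 1])
       (use hi sample_mean_nonneg[of hi M] sample_mean_le_1[OF M_pos, of hi] in auto)
  have "measure_pmf.expectation Q (\<lambda>\<omega>. \<bar>q_code \<omega> y - P y\<bar>)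
      \<le> measure_pmf.expectation Q (\<lambda>\<omega>. dev \<omega> + sample_mean M hi \<omega> + measure_pmf.expectation p hi)"
  proof (rule integral_mono[OF _ _ pointwise])
    show "integrable (measure_pmf Q) (\<lambda>\<omega>. \<bar>q_code \<omega> y - P y\<bar>)"
      by (rule measure_pmf.integrable_const_bound[where B = 1]) (simp_all add: abs_q_code_minus_P_le_1)
  qed (intro Bochner_Integration.integrable_add int_dev int_mean_hi measure_pmf.integrable_const)
  also have "\<dots> = measure_pmf.expectation Q dev + 2 * measure_pmf.expectation p hi"
    unfolding Bochner_Integration.integral_add[OF Bochner_Integration.integrable_add[OF int_dev int_mean_hi]
                measure_pmf.integrable_const]
      Bochner_Integration.integral_add[OF int_dev int_mean_hi]
    using expectation_iid_code_sample_mean[where f = hi and B = 1 and p = p, OF M_pos] hi by simp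
  finally have "measure_pmf.expectation Q (\<lambda>\<omega>. \<bar>q_code \<omega> y - P y\<bar>)
      \<le> measure_pmf.expectation Q dev + 2 * measure_pmf.expectation p hi" .
  moreover have "measure_pmf.expectation Q dev
      \<le> (c * (\<Sum>\<^sub>\<infinity>x. pmf p x * delta'_density C x y) / M + P y / c) / 2"
    unfolding dev_def lo_def by (rule expectation_abs_sample_mean_w_lo_deviation_le[OF c])
  moreover have "measure_pmf.expectation p hi = (\<Sum>\<^sub>\<infinity>x. pmf p x * w_hi C x y)"
    using hi by (simp add: expectation_eq_infsum_pmf[where B = 1] hi_def)
  ultimately show ?thesis by linarith
qed

lemma eps_code_eq: "eps_code W (map \<omega> [0..<M]) p = (\<Sum>\<^sub>\<infinity>y. \<bar>q_code \<omega> y - P y\<bar>)"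
  by (simp add: eps_code_def code_out_eq_q_code)

lemma summable_on_abs_q_code_minus_P: "(\<lambda>y. \<bar>q_code \<omega> y - P y\<bar>) summable_on UNIV"
  by (rule summable_on_comparison_test[OF summable_on_add[OF summable_on_q_code[of \<omega>] summable_on_P]])
     (use q_code_nonneg P_nonneg in \<open>auto simp: abs_le_iff\<close>)

lemma eps_code_le_2: "eps_code W (map \<omega> [0..<M]) p \<le> 2"
proof -
  have "(\<Sum>\<^sub>\<infinity>y. \<bar>q_code \<omega> y - P y\<bar>) \<le> (\<Sum>\<^sub>\<infinity>y. q_code \<omega> y + P y)"
    by (intro infsum_mono summable_on_abs_q_code_minus_P summable_on_add summable_on_q_code summable_on_P)
       (use q_code_nonneg P_nonneg in \<open>auto simp: abs_le_iff\<close>)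
  also have "\<dots> = 2"
    by (simp add: infsum_add summable_on_q_code summable_on_P infsum_q_code infsum_P)
  finally show ?thesis by (simp add: eps_code_eq)
qed

lemma expectation_eps_code_le:
  assumes C: "0 \<le> C" and c: "0 < c"
  shows "measure_pmf.expectation Q (\<lambda>\<omega>. eps_code W (map \<omega> [0..<M]) p)
         \<le> 2 * delta p W C + (c * (delta' p W C / M) + 1 / c) / 2"
proof -
  define hi where "hi y = (\<Sum>\<^sub>\<infinity>x. pmf p x * w_hi C x y)" for y
  define lo where "lo y = (\<Sum>\<^sub>\<infinity>x. pmf p x * delta'_density C x y)" for y
  have hi: "hi summable_on UNIV" "(\<Sum>\<^sub>\<infinity>y. hi y) = delta p W C"
    using delta_eq_infsum_w_hi by (simp_all add: hi_def[abs_def])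
  have lo: "lo summable_on UNIV" "(\<Sum>\<^sub>\<infinity>y. lo y) = delta' p W C"
    using delta'_eq_infsum_delta'_density[OF C] by (simp_all add: lo_def[abs_def])
  have "measure_pmf.expectation Q (\<lambda>\<omega>. \<Sum>\<^sub>\<infinity>y. \<bar>q_code \<omega> y - P y\<bar>)
      \<le> (\<Sum>\<^sub>\<infinity>y. 2 * hi y + (c / (2 * M)) * lo y + (1 / (2 * c)) * P y)"
  proof (rule expectation_infsum_le)
    show "integrable (measure_pmf Q) (\<lambda>\<omega>. \<bar>q_code \<omega> y - P y\<bar>)" for y
      by (intro measure_pmf.integrable_const_bound[where B = 1]) (simp_all add: abs_q_code_minus_P_le_1)
    show "measure_pmf.expectation Q (\<lambda>\<omega>. \<bar>q_code \<omega> y - P y\<bar>)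
        \<le> 2 * hi y + (c / (2 * M)) * lo y + (1 / (2 * c)) * P y" for y
    proof -
      have "(c * lo y / M + P y / c) / 2 = (c / (2 * M)) * lo y + (1 / (2 * c)) * P y"
        by (simp add: field_simps)
      then show ?thesis
        using expectation_abs_q_code_deviation_le[OF c, of y C] unfolding hi_def lo_def by linarith
    qed
    show "(\<lambda>y. 2 * hi y + (c / (2 * M)) * lo y + (1 / (2 * c)) * P y) summable_on UNIV"
      by (intro summable_on_add summable_on_cmult_right hi lo summable_on_P)
  qed (simp_all add: summable_on_abs_q_code_minus_P)
  also have "\<dots> = 2 * (\<Sum>\<^sub>\<infinity>y. hi y) + (c / (2 * M)) * (\<Sum>\<^sub>\<infinity>y. lo y) + (1 / (2 * c)) * (\<Sum>\<^sub>\<infinity>y. P y)"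
    by (simp only: infsum_add summable_on_add summable_on_cmult_right hi(1) lo(1) summable_on_P
                   infsum_cmult_right')
  also have "\<dots> = 2 * delta p W C + (c / (2 * M)) * delta' p W C + 1 / (2 * c)"
    by (simp only: hi(2) lo(2) infsum_P mult_1_right)
  also have "\<dots> = 2 * delta p W C + (c * (delta' p W C / M) + 1 / c) / 2"
    by (simp add: field_simps)
  finally show ?thesis by (simp add: eps_code_eq)
qed

lemma exists_code_eps_code_le:
  assumes "0 \<le> C"
  shows "\<exists>xs. length xs = M \<and> eps_code W xs p \<le> 2 * delta p W C + sqrt (delta' p W C / M)"
proof -
  let ?eps = "\<lambda>\<omega>. eps_code W (map \<omega> [0..<M]) p"
  have expectation: "measure_pmf.expectation Q ?eps \<le> 2 * delta p W C + sqrt (delta' p W C / M)"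
    by (rule le_add_sqrt_of_parametrized_bounds)
       (use delta'_nonneg expectation_eps_code_le[OF assms] in simp_all)
  have "\<bar>?eps \<omega>\<bar> \<le> 2" for \<omega>
    using eps_code_le_2[of \<omega>] by (simp add: eps_code_eq infsum_nonneg)
  then have "integrable (measure_pmf Q) ?eps"
    by (intro measure_pmf.integrable_const_bound[where B = 2]) auto
  then have "\<exists>\<omega>\<in>set_pmf Q. ?eps \<omega> \<le> measure_pmf.expectation Q ?eps"
    by (rule exists_in_set_pmf_le_expectation)
  then obtain \<omega> where "?eps \<omega> \<le> measure_pmf.expectation Q ?eps" ..
  then show ?thesis
    using expectation by (intro exI[of _ "map \<omega> [0..<M]"]) simp
qed

end

section \<open>Divergence\<close>

context random_code
begin

(* The conditional expectation of q_code \<omega> y / P y given \<omega> i = x. Where P y = 0, it is 0 by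
   x / 0 = 0, and every term w x y * ln (cond_ratio y x) below vanishes by ln 0 = 0. *)
definition cond_ratio :: "'y \<Rightarrow> 'x \<Rightarrow> real" where
  "cond_ratio y x = (w x y + (real M - 1) * P y) / (M * P y)"

lemma cond_ratio_ge: "0 < P y \<Longrightarrow> w x y / (M * P y) \<le> cond_ratio y x"
  using M_pos by (auto simp: cond_ratio_def intro!: divide_right_mono)

lemma cond_ratio_le:
  assumes "0 < P y"
  shows "cond_ratio y x \<le> 1 / P y"
proof -
  have "w x y + (real M - 1) * P y \<le> 1 + (real M - 1) * 1"
    using pmf_le_1[of "W x" y] P_le_1[of y] M_pos by (intro add_mono mult_left_mono) auto
  then show ?thesis
    using assms M_pos by (simp add: cond_ratio_def divide_le_eq field_simps)
qed

lemma cond_ratio_pos: "0 < P y \<Longrightarrow> 0 < w x y \<Longrightarrow> 0 < cond_ratio y x"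
  using M_pos by (auto simp: cond_ratio_def intro!: divide_pos_pos add_pos_nonneg)

lemma abs_w_ln_cond_ratio_le: "\<bar>w x y * ln (cond_ratio y x)\<bar> \<le> 1 + \<bar>ln (M * P y)\<bar> + 1 / P y"
proof (cases "P y = 0")
  case False
  then have "0 < P y" by (simp add: P_pos_iff)
  then show ?thesis
    using M_pos by (intro abs_mult_ln_le pmf_nonneg pmf_le_1 cond_ratio_ge cond_ratio_le) auto
qed (simp add: cond_ratio_def)

lemma abs_w_ln_q_code_ratio_le:
  assumes "i < M"
  shows "\<bar>w (\<omega> i) y * ln (q_code \<omega> y / P y)\<bar> \<le> 1 + \<bar>ln (M * P y)\<bar> + 1 / P y"
proof (cases "P y = 0")
  case False
  then have P: "0 < P y" by (simp add: P_pos_iff)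
  have "w (\<omega> i) y / (M * P y) \<le> q_code \<omega> y / P y"
    using w_le_M_q_code[OF assms, of \<omega> y] P M_pos by (simp add: field_simps)
  moreover have "q_code \<omega> y / P y \<le> 1 / P y"
    using q_code_le_1 P by (simp add: divide_right_mono)
  ultimately show ?thesis
    using M_pos P by (intro abs_mult_ln_le pmf_nonneg pmf_le_1) auto
qed simp

lemma expectation_coordinate_mult_q_code:
  fixes g :: "'x \<Rightarrow> real"
  assumes i: "i < M" and g: "\<And>x. 0 \<le> g x" "\<And>x. g x \<le> B"
  shows "measure_pmf.expectation Q (\<lambda>\<omega>. g (\<omega> i) * q_code \<omega> y)
       = (measure_pmf.expectation p (\<lambda>x. g x * w x y)
          + (real M - 1) * (measure_pmf.expectation p g * P y)) / M"
proof -
  define A where "A = measure_pmf.expectation p (\<lambda>x. g x * w x y)"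
  define A' where "A' = measure_pmf.expectation p g * P y"
  have g': "g x \<le> max B 1" for x
    using g(2)[of x] by (simp add: le_max_iff_disj)
  have w': "w x y \<le> max B 1" for x
    using pmf_le_1[of "W x" y] by (simp add: le_max_iff_disj)
  have terms: "measure_pmf.expectation Q (\<lambda>\<omega>. g (\<omega> i) * w (\<omega> j) y) = (if j = i then A else A')"
    if "j < M" for j
    using expectation_iid_code_coordinate[OF i, where f = "\<lambda>x. g x * w x y" and p = p]
      expectation_iid_code_two_coordinates[OF i that _ g(1) g' pmf_nonneg w', of p]
    by (auto simp: A_def A'_def P_eq_expectation)
  have "\<bar>g a * w b y\<bar> \<le> max B 1" for a b
    using mult_mono[OF g' pmf_le_1 _ pmf_nonneg, of a "W b" y] g(1)[of a] by (simp add: abs_mult)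
  then have int: "integrable (measure_pmf Q) (\<lambda>\<omega>. g (\<omega> i) * w (\<omega> j) y)" for j
    by (intro measure_pmf.integrable_const_bound[where B = "max B 1"]) auto
  have "measure_pmf.expectation Q (\<lambda>\<omega>. g (\<omega> i) * q_code \<omega> y)
      = (\<Sum>j<M. measure_pmf.expectation Q (\<lambda>\<omega>. g (\<omega> i) * w (\<omega> j) y)) / M"
    using int by (simp add: q_code_def sum_distrib_left)
  also have "\<dots> = (\<Sum>j<M. A' + (if j = i then A - A' else 0)) / M"
    by (intro arg_cong[where f = "\<lambda>t. t / _"] sum.cong) (simp_all add: terms)
  also have "\<dots> = (A + (real M - 1) * A') / M"
    using i by (simp add: sum.distrib algebra_simps)
  finally show ?thesis by (simp add: A_def A'_def)
qed

(* The coefficient of q_code \<omega> y in the tangent-line bound of w (\<omega> i) y * ln (q_code \<omega> y / P y)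
   at cond_ratio y (\<omega> i). *)
definition tangent_weight :: "'y \<Rightarrow> 'x \<Rightarrow> real" where
  "tangent_weight y x = w x y / (cond_ratio y x * P y)"

lemma tangent_weight_nonneg: "0 \<le> tangent_weight y x"
  using M_pos P_nonneg[of y] by (simp add: tangent_weight_def cond_ratio_def)

lemma tangent_weight_le: "tangent_weight y x \<le> M"
proof (cases "P y = 0 \<or> w x y = 0")
  case False
  then have P: "0 < P y" and w: "0 < w x y"
    using pmf_nonneg[of "W x" y] P_nonneg[of y] by (auto simp: less_le)
  have "w x y / (M * P y) * P y \<le> cond_ratio y x * P y"
    using cond_ratio_ge[OF P, of x] P by (intro mult_right_mono) auto
  then have "w x y \<le> M * (cond_ratio y x * P y)"
    using M_pos P by (simp add: divide_le_eq ac_simps)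
  then show ?thesis
    using cond_ratio_pos[OF P w] P by (simp add: tangent_weight_def divide_le_eq)
qed (auto simp: tangent_weight_def)

lemma tangent_weight_mult:
  assumes P: "0 < P y"
  shows "tangent_weight y x * (w x y + (real M - 1) * P y) = M * w x y"
proof (cases "w x y = 0")
  case False
  define a where "a = w x y + (real M - 1) * P y"
  have "0 < w x y"
    using False pmf_nonneg[of "W x" y] by linarith
  then have a: "0 < a"
    using M_pos P by (simp add: a_def add_pos_nonneg)
  have cond: "cond_ratio y x * P y = a / M"
    using P by (simp add: cond_ratio_def a_def)
  show ?thesis
    unfolding tangent_weight_def cond a_def[symmetric] using a M_pos by simp
qed (simp add: tangent_weight_def)

lemma expectation_tangent_weight_mult_q_code:
  assumes P: "0 < P y" and i: "i < M"
  shows "measure_pmf.expectation Q (\<lambda>\<omega>. tangent_weight y (\<omega> i) * q_code \<omega> y) = P y"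
proof -
  let ?g = "tangent_weight y"
  have "\<bar>?g x * w x y\<bar> \<le> M" for x
    using mult_mono[OF tangent_weight_le pmf_le_1[of "W x" y] _ pmf_nonneg] tangent_weight_nonneg[of y x]
    by simp
  then have int_g_w: "integrable (measure_pmf p) (\<lambda>x. ?g x * w x y)"
    by (intro measure_pmf.integrable_const_bound[where B = M]) auto
  have int_g: "integrable (measure_pmf p) ?g"
    by (rule measure_pmf.integrable_const_bound[where B = M])
       (use tangent_weight_nonneg tangent_weight_le in auto)
  have "measure_pmf.expectation Q (\<lambda>\<omega>. ?g (\<omega> i) * q_code \<omega> y)
      = (measure_pmf.expectation p (\<lambda>x. ?g x * w x y) + (real M - 1) * P y * measure_pmf.expectation p ?g) / M"
    using expectation_coordinate_mult_q_code[where g = ?g, OF i tangent_weight_nonneg tangent_weight_le]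
    by (simp add: ac_simps)
  also have "\<dots> = measure_pmf.expectation p (\<lambda>x. ?g x * w x y + (real M - 1) * P y * ?g x) / M"
    by (simp add: Bochner_Integration.integral_add[OF int_g_w integrable_mult_right[OF int_g]])
  also have "\<dots> = measure_pmf.expectation p (\<lambda>x. M * w x y) / M"
    by (simp add: tangent_weight_mult[OF P, symmetric] algebra_simps)
  also have "\<dots> = P y"
    using M_pos by (simp add: P_eq_expectation)
  finally show ?thesis .
qed

lemma w_ln_q_code_ratio_le_tangent:
  assumes P: "0 < P y" and i: "i < M"
  shows "w (\<omega> i) y * ln (q_code \<omega> y / P y)
         \<le> w (\<omega> i) y * ln (cond_ratio y (\<omega> i)) + tangent_weight y (\<omega> i) * q_code \<omega> y - w (\<omega> i) y"
proof (cases "w (\<omega> i) y = 0")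
  case False
  then have w: "0 < w (\<omega> i) y" using pmf_nonneg[of "W (\<omega> i)" y] by linarith
  have "0 < real M * q_code \<omega> y" using w_le_M_q_code[OF i, of \<omega> y] w by linarith
  then have "0 < q_code \<omega> y" using M_pos by (simp add: zero_less_mult_iff)
  then have "ln (q_code \<omega> y / P y)
      \<le> ln (cond_ratio y (\<omega> i)) + (q_code \<omega> y / P y) / cond_ratio y (\<omega> i) - 1"
    using P cond_ratio_pos[OF P w] by (intro ln_le_tangent) auto
  from mult_left_mono[OF this less_imp_le[OF w]] show ?thesis
    by (simp add: tangent_weight_def algebra_simps)
qed (simp add: tangent_weight_def)

lemma expectation_w_ln_q_code_ratio_le:
  assumes i: "i < M"
  shows "measure_pmf.expectation Q (\<lambda>\<omega>. w (\<omega> i) y * ln (q_code \<omega> y / P y))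
         \<le> measure_pmf.expectation p (\<lambda>x. w x y * ln (cond_ratio y x))"
proof (cases "P y = 0")
  case False
  then have P: "0 < P y" by (simp add: P_pos_iff)
  have "\<bar>tangent_weight y a * q_code \<omega> y\<bar> \<le> M" for a \<omega>
    using mult_mono[OF tangent_weight_le q_code_le_1 _ q_code_nonneg, of y a \<omega> y]
      tangent_weight_nonneg[of y a] q_code_nonneg[of \<omega> y]
    by (simp add: abs_mult)
  then have int_g: "integrable (measure_pmf Q) (\<lambda>\<omega>. tangent_weight y (\<omega> i) * q_code \<omega> y)"
    by (intro measure_pmf.integrable_const_bound[where B = M]) auto
  have int_lhs: "integrable (measure_pmf Q) (\<lambda>\<omega>. w (\<omega> i) y * ln (q_code \<omega> y / P y))"
    by (rule measure_pmf.integrable_const_bound) (auto intro: abs_w_ln_q_code_ratio_le[OF i])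
  have int_ln: "integrable (measure_pmf Q) (\<lambda>\<omega>. w (\<omega> i) y * ln (cond_ratio y (\<omega> i)))"
    by (rule measure_pmf.integrable_const_bound) (auto intro: abs_w_ln_cond_ratio_le)
  have int_w: "integrable (measure_pmf Q) (\<lambda>\<omega>. w (\<omega> i) y)"
    by (rule measure_pmf.integrable_const_bound[where B = 1]) (auto simp: pmf_le_1)
  have "measure_pmf.expectation Q (\<lambda>\<omega>. w (\<omega> i) y * ln (q_code \<omega> y / P y))
      \<le> measure_pmf.expectation Q (\<lambda>\<omega>. w (\<omega> i) y * ln (cond_ratio y (\<omega> i))
                                        + tangent_weight y (\<omega> i) * q_code \<omega> y - w (\<omega> i) y)"
    by (intro integral_mono int_lhs w_ln_q_code_ratio_le_tangent[OF P i] Bochner_Integration.integrable_diff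
              Bochner_Integration.integrable_add int_ln int_g int_w)
  also have "\<dots> = measure_pmf.expectation p (\<lambda>x. w x y * ln (cond_ratio y x))"
    using int_ln int_g int_w expectation_tangent_weight_mult_q_code[OF P i]
      expectation_iid_code_coordinate[OF i, where f = "\<lambda>x. w x y * ln (cond_ratio y x)" and p = p]
      expectation_iid_code_coordinate[OF i, where f = "\<lambda>x. w x y" and p = p]
    by (simp add: P_eq_expectation)
  finally show ?thesis .
qed (simp add: cond_ratio_def)

lemma w_ln_cond_ratio_le_delta_terms:
  "w x y * ln (cond_ratio y x) \<le> delta'_density C x y / M + w_hi C x y * (- ln (P y))"
proof (cases "P y = 0 \<or> w x y = 0")
  case True
  then show ?thesis
    by (auto simp: cond_ratio_def delta'_density_def w_hi_def w_lo_def)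
next
  case False
  then have P: "0 < P y" and w: "0 < w x y"
    using pmf_nonneg[of "W x" y] P_nonneg[of y] by (auto simp: less_le)
  have cond_pos: "0 < cond_ratio y x" by (rule cond_ratio_pos[OF P w])
  show ?thesis
  proof (cases "w x y \<le> C * P y")
    case True
    have "w x y * ln (cond_ratio y x) \<le> w x y * (cond_ratio y x - 1)"
      using ln_le_minus_one[OF cond_pos] w by simp
    also have "cond_ratio y x - 1 = (w x y - P y) / (M * P y)"
      using P M_pos by (simp add: cond_ratio_def field_simps)
    also have "w x y * ((w x y - P y) / (M * P y)) \<le> (w x y)\<^sup>2 / (M * P y)"
    proof -
      have "w x y * (w x y - P y) \<le> (w x y)\<^sup>2"
        using w P by (simp add: power2_eq_square right_diff_distrib)
      then show ?thesis
        unfolding times_divide_eq_right using P by (intro divide_right_mono) auto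
    qed
    also have "\<dots> = delta'_density C x y / M"
      using True by (simp add: delta'_density_def w_lo_def)
    finally show ?thesis using True by (simp add: w_hi_def)
  next
    case False
    have "ln (cond_ratio y x) \<le> ln (1 / P y)"
      using cond_ratio_le[OF P, of x] cond_pos P by simp
    then have "ln (cond_ratio y x) \<le> - ln (P y)"
      using P by (simp add: ln_div)
    from mult_left_mono[OF this less_imp_le[OF w]]
    have "w x y * ln (cond_ratio y x) \<le> w x y * (- ln (P y))" .
    then show ?thesis using False by (simp add: w_hi_def delta'_density_def w_lo_def)
  qed
qed

lemma w_ln_cond_ratio_le_ln_powr:
  assumes s: "0 < s" "s \<le> 1"
  shows "w x y * ln (cond_ratio y x) \<le> w x y * ln (1 + (w x y / (M * P y)) powr s) / s"
proof (cases "P y = 0 \<or> w x y = 0")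
  case False
  then have P: "0 < P y" and w: "0 < w x y"
    using pmf_nonneg[of "W x" y] P_nonneg[of y] by (auto simp: less_le)
  define u where "u = w x y / (M * P y)"
  have u: "0 \<le> u" using P by (simp add: u_def)
  have "cond_ratio y x = u + (real M - 1) / M"
    using P M_pos by (simp add: cond_ratio_def u_def field_simps)
  then have "cond_ratio y x \<le> 1 + u"
    using M_pos by (simp add: divide_le_eq)
  then have ln_cond: "ln (cond_ratio y x) \<le> ln (1 + u)"
    using cond_ratio_pos[OF P w] u by simp
  have "ln ((1 + u) powr s) \<le> ln (1 + u powr s)"
    using one_plus_powr_le[OF u less_imp_le[OF s(1)] s(2)] u by (intro ln_mono) auto
  then have "s * ln (1 + u) \<le> ln (1 + u powr s)"
    using u by (simp add: ln_powr)
  then have "ln (1 + u) \<le> ln (1 + u powr s) / s"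
    using s by (simp add: le_divide_eq mult.commute)
  with ln_cond have "ln (cond_ratio y x) \<le> ln (1 + u powr s) / s"
    by linarith
  then have "w x y * ln (cond_ratio y x) \<le> w x y * (ln (1 + u powr s) / s)"
    using w by (intro mult_left_mono) auto
  then show ?thesis by (simp add: u_def)
qed (auto simp: cond_ratio_def)

lemma abs_w_mult_powr_le:
  assumes s: "0 < s" "s \<le> 1"
  shows "\<bar>w x y * (w x y / (M * P y)) powr s\<bar> \<le> 1 + 1 / (M * P y)"
proof -
  define u where "u = w x y / (M * P y)"
  have u: "0 \<le> u" "u \<le> 1 / (M * P y)"
    using pmf_le_1[of "W x" y] P_nonneg[of y] by (auto simp: u_def divide_right_mono)
  have "u powr s \<le> 1 + u"
  proof (cases "u \<le> 1")
    case True
    then show ?thesis using powr_le1[of s u] u s by simp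
  next
    case False
    then show ?thesis using powr_mono[of s 1 u] s by simp
  qed
  then have "w x y * u powr s \<le> 1 * (1 + 1 / (M * P y))"
    using u pmf_le_1[of "W x" y] by (intro mult_mono) auto
  then show ?thesis by (simp add: u_def)
qed

lemma infsum_w_mult_powr_le:
  assumes s: "0 < s" "s < 1"
  shows "(\<Sum>\<^sub>\<infinity>x. pmf p x * (w x y * (w x y / (M * P y)) powr s))
         \<le> (\<Sum>\<^sub>\<infinity>x. pmf p x * w x y powr (1 / (1 - s))) powr (1 - s) / M powr s"
proof (cases "P y = 0")
  case False
  then have P: "0 < P y" by (simp add: P_pos_iff)
  have summand: "pmf p x * (w x y * (w x y / (M * P y)) powr s)
      = pmf p x * w x y powr (1 + s) * (1 / (M * P y) powr s)" for x
    by (cases "w x y = 0") (simp_all add: powr_divide powr_add)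
  have "(\<Sum>\<^sub>\<infinity>x. pmf p x * (w x y * (w x y / (M * P y)) powr s))
      = (\<Sum>\<^sub>\<infinity>x. pmf p x * w x y powr (1 + s)) * (1 / (M * P y) powr s)"
    by (simp only: summand infsum_cmult_left')
  also have "\<dots> \<le> (\<Sum>\<^sub>\<infinity>x. pmf p x * w x y powr (1 / (1 - s))) powr (1 - s) * P y powr s
                  * (1 / (M * P y) powr s)"
    using Holder_pmf[where a = "\<lambda>x. w x y" and B = 1 and p = p, OF pmf_nonneg pmf_le_1 s]
    by (intro mult_right_mono) (simp_all add: Wp_def)
  also have "\<dots> = (\<Sum>\<^sub>\<infinity>x. pmf p x * w x y powr (1 / (1 - s))) powr (1 - s) / M powr s"
    using P M_pos by (simp add: powr_mult)
  finally show ?thesis .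
qed (simp add: infsum_nonneg)

lemma infsum_w_ln_cond_ratio_le_delta_terms:
  assumes C: "0 \<le> C"
  shows "(\<Sum>\<^sub>\<infinity>x. pmf p x * (w x y * ln (cond_ratio y x)))
         \<le> (\<Sum>\<^sub>\<infinity>x. pmf p x * delta'_density C x y) / M + eta (\<Sum>\<^sub>\<infinity>x. pmf p x * w_hi C x y)"
proof -
  define hi where "hi = (\<Sum>\<^sub>\<infinity>x. pmf p x * w_hi C x y)"
  have summable_hi: "(\<lambda>x. pmf p x * w_hi C x y) summable_on UNIV"
    by (rule summable_on_pmf_mult_bounded[OF abs_w_hi_le_1])
  have summable_d: "(\<lambda>x. pmf p x * delta'_density C x y) summable_on UNIV"
    by (rule summable_on_pmf_mult_bounded[OF abs_delta'_density_le[OF C]])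
  have "(\<Sum>\<^sub>\<infinity>x. pmf p x * (w x y * ln (cond_ratio y x)))
      \<le> (\<Sum>\<^sub>\<infinity>x. pmf p x * delta'_density C x y * (1 / M) + pmf p x * w_hi C x y * (- ln (P y)))"
  proof (rule infsum_mono)
    show "(\<lambda>x. pmf p x * (w x y * ln (cond_ratio y x))) summable_on UNIV"
      by (rule summable_on_pmf_mult_bounded[OF abs_w_ln_cond_ratio_le])
    show "(\<lambda>x. pmf p x * delta'_density C x y * (1 / M) + pmf p x * w_hi C x y * (- ln (P y)))
        summable_on UNIV"
      by (intro summable_on_add summable_on_cmult_left summable_hi summable_d)
    show "pmf p x * (w x y * ln (cond_ratio y x))
        \<le> pmf p x * delta'_density C x y * (1 / M) + pmf p x * w_hi C x y * (- ln (P y))" for x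
      using mult_left_mono[OF w_ln_cond_ratio_le_delta_terms[where x = x and y = y and C = C] pmf_nonneg[of p x]]
      by (simp add: algebra_simps)
  qed
  also have "\<dots> = (\<Sum>\<^sub>\<infinity>x. pmf p x * delta'_density C x y) / M + (- ln (P y)) * hi"
    by (simp only: infsum_add[OF summable_on_cmult_left[OF summable_d] summable_on_cmult_left[OF summable_hi]]
                   infsum_cmult_left' hi_def) simp
  also have "(- ln (P y)) * hi \<le> eta hi"
  proof (cases "hi = 0")
    case False
    have "hi \<le> P y"
      unfolding hi_def Wp_def
      by (intro infsum_mono summable_hi summable_on_pmf_mult_bounded[where B = 1] mult_left_mono w_hi_le)
         (simp_all add: pmf_le_1)
    moreover have "0 < hi"
      using False infsum_nonneg[of UNIV "\<lambda>x. pmf p x * w_hi C x y"] by (simp add: hi_def w_hi_nonneg)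
    ultimately have "ln hi * hi \<le> ln (P y) * hi"
      by (intro mult_right_mono) auto
    then show ?thesis by (simp add: eta_def mult.commute)
  qed (simp add: eta_def)
  finally show ?thesis by (simp add: hi_def)
qed

lemma infsum_w_ln_cond_ratio_le_ln_powr:
  assumes s: "0 < s" "s \<le> 1"
  shows "(\<Sum>\<^sub>\<infinity>x. pmf p x * (w x y * ln (cond_ratio y x)))
         \<le> (\<Sum>\<^sub>\<infinity>x. pmf p x * w x y * ln (1 + (w x y / (M * P y)) powr s)) / s"
proof -
  have summable: "(\<lambda>x. pmf p x * w x y * (w x y / (M * P y)) powr s) summable_on UNIV"
    using summable_on_pmf_mult_bounded[OF abs_w_mult_powr_le[OF s]] by (simp add: mult.assoc)
  have "(\<Sum>\<^sub>\<infinity>x. pmf p x * (w x y * ln (cond_ratio y x)))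
      \<le> (\<Sum>\<^sub>\<infinity>x. pmf p x * w x y * ln (1 + (w x y / (M * P y)) powr s) * (1 / s))"
  proof (rule infsum_mono)
    show "(\<lambda>x. pmf p x * (w x y * ln (cond_ratio y x))) summable_on UNIV"
      by (rule summable_on_pmf_mult_bounded[OF abs_w_ln_cond_ratio_le])
    show "(\<lambda>x. pmf p x * w x y * ln (1 + (w x y / (M * P y)) powr s) * (1 / s)) summable_on UNIV"
    proof (intro summable_on_cmult_left summable_on_comparison_test[OF summable])
      show "pmf p x * w x y * ln (1 + (w x y / (M * P y)) powr s)
          \<le> pmf p x * w x y * (w x y / (M * P y)) powr s" for x
        by (intro mult_left_mono ln_add_one_self_le_self) simp_all
    qed simp
    show "pmf p x * (w x y * ln (cond_ratio y x))
        \<le> pmf p x * w x y * ln (1 + (w x y / (M * P y)) powr s) * (1 / s)" for x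
      using mult_left_mono[OF w_ln_cond_ratio_le_ln_powr[OF s] pmf_nonneg] by (simp add: mult.assoc)
  qed
  also have "\<dots> = (\<Sum>\<^sub>\<infinity>x. pmf p x * w x y * ln (1 + (w x y / (M * P y)) powr s)) * (1 / s)"
    by (rule infsum_cmult_left')
  finally show ?thesis by simp
qed

end

locale finite_random_code = random_code W p M
  for W :: "'x \<Rightarrow> 'y::countable pmf" and p M +
  assumes finite_outputs: "finite (UNIV :: 'y set)"
begin

definition divergence_bound :: real where
  "divergence_bound = (\<Sum>y\<in>UNIV. \<Sum>\<^sub>\<infinity>x. pmf p x * (w x y * ln (cond_ratio y x)))"

lemma D_code_eq:
  assumes "\<omega> \<in> set_pmf Q"
  shows "D_code W (map \<omega> [0..<M]) p = ereal (\<Sum>y\<in>UNIV. q_code \<omega> y * ln (q_code \<omega> y / P y))"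
proof -
  have "\<not> (\<exists>y. 0 < q_code \<omega> y \<and> P y = 0)"
    using P_pos_if_q_code_pos[OF assms] by force
  moreover have "(\<lambda>y. if q_code \<omega> y = 0 then 0 else q_code \<omega> y * ln (q_code \<omega> y / P y))
      = (\<lambda>y. q_code \<omega> y * ln (q_code \<omega> y / P y))"
    by auto
  ultimately show ?thesis
    by (simp add: D_code_def KL_def code_out_eq_q_code infsum_finite[OF finite_outputs])
qed

lemma q_code_mult_ln_ratio_eq:
  "q_code \<omega> y * ln (q_code \<omega> y / P y) = (\<Sum>i<M. w (\<omega> i) y * ln (q_code \<omega> y / P y)) / M"
  by (simp add: q_code_def[of \<omega> y] sum_distrib_right)

lemma integrable_code_divergence_term:
  "integrable (measure_pmf Q) (\<lambda>\<omega>. (\<Sum>i<M. w (\<omega> i) y * ln (q_code \<omega> y / P y)) / M)"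
  by (intro integrable_divide_zero Bochner_Integration.integrable_sum measure_pmf.integrable_const_bound)
     (auto intro: abs_w_ln_q_code_ratio_le)

lemma expectation_code_divergence_le:
  "measure_pmf.expectation Q (\<lambda>\<omega>. \<Sum>y\<in>UNIV. q_code \<omega> y * ln (q_code \<omega> y / P y)) \<le> divergence_bound"
proof -
  have "measure_pmf.expectation Q (\<lambda>\<omega>. \<Sum>y\<in>UNIV. q_code \<omega> y * ln (q_code \<omega> y / P y))
      = (\<Sum>y\<in>UNIV. (\<Sum>i<M. measure_pmf.expectation Q (\<lambda>\<omega>. w (\<omega> i) y * ln (q_code \<omega> y / P y))) / M)"
    unfolding q_code_mult_ln_ratio_eq Bochner_Integration.integral_sum[OF integrable_code_divergence_term]
  proof (intro sum.cong refl)
    fix y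
    have "measure_pmf.expectation Q (\<lambda>\<omega>. \<Sum>i<M. w (\<omega> i) y * ln (q_code \<omega> y / P y))
        = (\<Sum>i<M. measure_pmf.expectation Q (\<lambda>\<omega>. w (\<omega> i) y * ln (q_code \<omega> y / P y)))"
      by (intro Bochner_Integration.integral_sum measure_pmf.integrable_const_bound)
         (auto intro: abs_w_ln_q_code_ratio_le)
    then show "measure_pmf.expectation Q (\<lambda>\<omega>. (\<Sum>i<M. w (\<omega> i) y * ln (q_code \<omega> y / P y)) / M)
        = (\<Sum>i<M. measure_pmf.expectation Q (\<lambda>\<omega>. w (\<omega> i) y * ln (q_code \<omega> y / P y))) / M"
      by simp
  qed
  also have "\<dots> \<le> (\<Sum>y\<in>UNIV. (\<Sum>i<M. measure_pmf.expectation p (\<lambda>x. w x y * ln (cond_ratio y x))) / M)"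
    by (intro sum_mono divide_right_mono expectation_w_ln_q_code_ratio_le) auto
  also have "\<dots> = divergence_bound"
    using M_pos by (simp add: divergence_bound_def expectation_eq_infsum_pmf[OF abs_w_ln_cond_ratio_le])
  finally show ?thesis .
qed

lemma exists_code_D_code_le:
  assumes "divergence_bound \<le> B"
  shows "\<exists>xs. length xs = M \<and> D_code W xs p \<le> ereal B"
proof -
  let ?D = "\<lambda>\<omega>. \<Sum>y\<in>UNIV. q_code \<omega> y * ln (q_code \<omega> y / P y)"
  have "integrable (measure_pmf Q) ?D"
    unfolding q_code_mult_ln_ratio_eq
    by (intro Bochner_Integration.integrable_sum integrable_code_divergence_term)
  then have "\<exists>\<omega>\<in>set_pmf Q. ?D \<omega> \<le> measure_pmf.expectation Q ?D"
    by (rule exists_in_set_pmf_le_expectation)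
  then obtain \<omega> where "\<omega> \<in> set_pmf Q" "?D \<omega> \<le> measure_pmf.expectation Q ?D" ..
  then show ?thesis
    using expectation_code_divergence_le assms
    by (intro exI[of _ "map \<omega> [0..<M]"]) (simp add: D_code_eq)
qed

lemma divergence_bound_le_entropy_bound:
  assumes C: "0 \<le> C"
  shows "divergence_bound
         \<le> eta (delta p W C) + delta p W C * ln (card (UNIV :: 'y set)) + delta' p W C / M"
proof -
  define hi where "hi y = (\<Sum>\<^sub>\<infinity>x. pmf p x * w_hi C x y)" for y
  define d where "d y = (\<Sum>\<^sub>\<infinity>x. pmf p x * delta'_density C x y)" for y
  have "divergence_bound \<le> (\<Sum>y\<in>UNIV. d y / M + eta (hi y))"
    unfolding divergence_bound_def d_def hi_def by (intro sum_mono infsum_w_ln_cond_ratio_le_delta_terms C)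
  also have "\<dots> = (\<Sum>y\<in>UNIV. d y) / M + (\<Sum>y\<in>UNIV. eta (hi y))"
    by (simp add: sum.distrib sum_divide_distrib)
  also have "\<dots> \<le> (\<Sum>y\<in>UNIV. d y) / M + eta (\<Sum>y\<in>UNIV. hi y) + (\<Sum>y\<in>UNIV. hi y) * ln (card (UNIV :: 'y set))"
    using sum_eta_le[OF finite_outputs, of hi] by (simp add: hi_def infsum_nonneg w_hi_nonneg)
  also have "(\<Sum>y\<in>UNIV. d y) = delta' p W C"
    using delta'_eq_infsum_delta'_density(1)[OF C] by (simp add: d_def finite_outputs)
  also have "(\<Sum>y\<in>UNIV. hi y) = delta p W C"
    using delta_eq_infsum_w_hi(1) by (simp add: hi_def finite_outputs)
  finally show ?thesis by simp
qed

lemma sum_infsum_w_mult_powr_le_phi: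
  assumes t: "-1 < t" "t < 0"
  shows "(\<Sum>y\<in>UNIV. \<Sum>\<^sub>\<infinity>x. pmf p x * w x y * (w x y / (M * P y)) powr (- t))
         \<le> M powr t * exp (phi t W p)"
proof -
  define A where "A y = (\<Sum>\<^sub>\<infinity>x. pmf p x * w x y powr (1 / (1 + t)))" for y
  have "(\<Sum>y\<in>UNIV. \<Sum>\<^sub>\<infinity>x. pmf p x * w x y * (w x y / (M * P y)) powr (- t))
      \<le> (\<Sum>y\<in>UNIV. A y powr (1 + t)) / M powr (- t)"
    unfolding A_def sum_divide_distrib
    using infsum_w_mult_powr_le[of "- t"] t by (intro sum_mono) (simp add: mult.assoc)
  also have "(\<Sum>y\<in>UNIV. A y powr (1 + t)) \<le> exp (ln (\<Sum>y\<in>UNIV. A y powr (1 + t)))"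
    using sum_nonneg[of UNIV "\<lambda>y. A y powr (1 + t)"]
    by (cases "(\<Sum>y\<in>UNIV. A y powr (1 + t)) = 0") (simp_all add: less_le)
  then have "(\<Sum>y\<in>UNIV. A y powr (1 + t)) / M powr (- t) \<le> M powr t * exp (phi t W p)"
    using M_pos by (simp add: phi_def A_def finite_outputs powr_minus_divide divide_right_mono)
  finally show ?thesis .
qed

lemma divergence_bound_le_phi_bound:
  assumes t: "-1 < t" "t < 0"
  shows "divergence_bound \<le> ln (1 + M powr t * exp (phi t W p)) / (- t)"
proof -
  define Z where "Z x y = (w x y / (M * P y)) powr (- t)" for x y
  define K where "K = (\<Sum>y\<in>UNIV. \<Sum>\<^sub>\<infinity>x. pmf p x * w x y * Z x y)"
  have summable_Z: "(\<lambda>x. pmf p x * w x y * Z x y) summable_on UNIV" for y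
    using summable_on_pmf_mult_bounded[OF abs_w_mult_powr_le[of "- t"]] t by (simp add: Z_def mult.assoc)
  have summable_w: "(\<lambda>x. pmf p x * w x y) summable_on UNIV" for y
    by (rule summable_on_pmf_mult_bounded[where B = 1]) (simp add: pmf_le_1)
  have total: "(\<Sum>y\<in>UNIV. \<Sum>\<^sub>\<infinity>x. pmf p x * w x y) = 1"
    using infsum_P by (simp add: Wp_def finite_outputs)
  have "divergence_bound \<le> (\<Sum>y\<in>UNIV. (\<Sum>\<^sub>\<infinity>x. pmf p x * w x y * ln (1 + Z x y)) / (- t))"
    unfolding divergence_bound_def Z_def using t by (intro sum_mono infsum_w_ln_cond_ratio_le_ln_powr) auto
  also have "\<dots> = (\<Sum>y\<in>UNIV. \<Sum>\<^sub>\<infinity>x. pmf p x * w x y * ln (1 + Z x y)) / (- t)"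
    by (simp only: sum_divide_distrib)
  also have "\<dots> \<le> ln (1 + K) / (- t)"
    unfolding K_def using t
    by (intro divide_right_mono sum_infsum_ln_one_plus_le[OF _ _ summable_w summable_Z total])
       (simp_all add: Z_def)
  also have "\<dots> \<le> ln (1 + M powr t * exp (phi t W p)) / (- t)"
  proof -
    have "0 \<le> K" unfolding K_def Z_def by (intro sum_nonneg infsum_nonneg) simp
    moreover have "K \<le> M powr t * exp (phi t W p)"
      unfolding K_def Z_def by (rule sum_infsum_w_mult_powr_le_phi[OF t])
    ultimately show ?thesis using t by (intro divide_right_mono) auto
  qed
  finally show ?thesis .
qed

end

theorem theorem2:
  fixes W :: "'x::countable \<Rightarrow> 'y::countable pmf"
    and p :: "'x pmf" and M :: nat and C :: real
  assumes "M > 0" and "C > 0"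
  shows "(\<exists>xs. length xs = M \<and>
            eps_code W xs p \<le> 2 * delta p W C + sqrt (delta' p W C / real M))
       \<and> delta' p W C \<le> C
       \<and> (finite (UNIV :: 'y set) \<longrightarrow>
            (\<forall>t::real. -1/2 \<le> t \<and> t < 0 \<longrightarrow>
               (\<exists>xs. length xs = M \<and>
                  D_code W xs p \<le> ereal (ln (1 + real M powr t * exp (phi t W p)) / (- t))))
          \<and> (\<exists>xs. length xs = M \<and>
                D_code W xs p \<le> ereal (eta (delta p W C) + delta p W C * ln (real (card (UNIV :: 'y set)))
                                        + delta' p W C / real M)))"
proof -
  interpret random_code W p M
    using assms(1) by unfold_locales
  have C: "0 \<le> C"
    using assms(2) by simp
  have phi_bound: "\<exists>xs. length xs = M \<and>
      D_code W xs p \<le> ereal (ln (1 + real M powr t * exp (phi t W p)) / (- t))"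
    if "finite (UNIV :: 'y set)" "-1/2 \<le> t \<and> t < 0" for t :: real
  proof -
    interpret finite_random_code W p M
      using that(1) by unfold_locales
    show ?thesis
      using that(2) by (intro exists_code_D_code_le divergence_bound_le_phi_bound) auto
  qed
  have entropy_bound: "\<exists>xs. length xs = M \<and> D_code W xs p \<le> ereal (eta (delta p W C)
      + delta p W C * ln (real (card (UNIV :: 'y set))) + delta' p W C / real M)"
    if "finite (UNIV :: 'y set)"
  proof -
    interpret finite_random_code W p M
      using that by unfold_locales
    show ?thesis
      by (intro exists_code_D_code_le divergence_bound_le_entropy_bound C)
  qed
  show ?thesis
    using exists_code_eps_code_le[OF C] delta'_le[OF C] phi_bound entropy_bound by blast
qed

end
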